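(* Let $p_0$ be a probability distribution on $\mathbb{R}^d$, fix $t>0$, and let $\theta\mapsto M_t(\theta)$, $\theta\in\mathbb{R}^c$, be a differentiable map into symmetric positive definite $d\times d$ matrices. Let $p_t(\cdot;\theta)=p_0*\mathcal N(0,M_t(\theta))$ (the density of $x_0+M_t(\theta)^{1/2}\epsilon$, $x_0\sim p_0$, $\epsilon\sim\mathcal N(0,I)$ independent), and let $e_1,\dots,e_d$ be the standard basis of $\mathbb{R}^d$. Then for every coordinate $j\in\{1,\dots,c\}$ and all $x\in\mathbb{R}^d$, \[ \partial_{\theta_j}\nabla \log p_t(x;\theta)=\frac12\sum_{i=1}^d\partial_r\partial_s\,\nabla\log p_t\big(x+re_i+s\,\partial_{\theta_j}M_t(\theta)\,e_i;\theta\big)\Big|_{r=s=0}+\partial_s\,\nabla\log p_t\big(x+s\,\partial_{\theta_j}M_t(\theta)\,\nabla\log p_t(x;\theta);\theta\big)\Big|_{s=0}. \] Moreover, let $s(x,t,\phi)$ be a parametric vector field and, for each $\theta$, let $\phi^*(\theta)$ be a minimizer over $\phi$ of the loss \[ L(\theta,\phi)=\mathbb{E}_{t\sim\mathrm{Unif}[0,T],x_0\sim p_0,\epsilon\sim\mathcal N(0,I)}\Big[\big\|(I+M_t(\theta))^{-1/2}(\partial_tM_t(\theta))M_t(\theta)^{1/2}\big(M_t(\theta)^{1/2}s(x_0+M_t(\theta)^{1/2}\epsilon,t,\phi)+\epsilon\big)\big\|_2^2\Big], \] where $t\mapsto M_t(\theta)$ satisfies $M_0(\theta)=0$, $\partial_tM_t(\theta)\succ0$.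 Under sufficient model capacity and data (so that $s(\cdot,t,\phi^*(\theta))=\nabla\log p_t(\cdot;\theta)$), for all $x\in\mathbb{R}^d$, \[ \partial_{\theta_j}s(x,t,\phi^*(\theta))=\frac12\sum_{i=1}^d\partial_r\partial_s\, s\big(x+re_i+s\,\partial_{\theta_j}M_t(\theta)e_i,\,t,\,\phi^*(\theta)\big)\Big|_{r=s=0}+\partial_s\, s\big(x+s\,\partial_{\theta_j}M_t(\theta)\,s(x,t,\phi^*(\theta)),\,t,\,\phi^*(\theta)\big)\Big|_{s=0}. \]
   Context: In the displayed formulas, $r$ and $s$ (when used as scalar arguments) are real variables and $\partial_r,\partial_s$ denote derivatives with respect to them at $0$; the dependence on $\theta$ inside $\nabla\log p_t(\cdot;\theta)$ and $s(\cdot,t,\phi^*(\theta))$ on the right-hand sides is held fixed when differentiating in $r,s$. $\nabla$ denotes the gradient with respect to $x$. *)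

theory Defs
  imports "HOL-Analysis.Analysis" "HOL-Probability.Probability"
begin

definition sym_pd :: "real^'n^'n \<Rightarrow> bool" where
  "sym_pd A \<longleftrightarrow> transpose A = A \<and> (\<forall>v. v \<noteq> 0 \<longrightarrow> v \<bullet> (A *v v) > 0)"

definition sym_psd :: "real^'n^'n \<Rightarrow> bool" where
  "sym_psd A \<longleftrightarrow> transpose A = A \<and> (\<forall>v. v \<bullet> (A *v v) \<ge> 0)"

definition msqrt :: "real^'n^'n \<Rightarrow> real^'n^'n" where
  "msqrt A = (THE B. sym_psd B \<and> B ** B = A)"

definition gauss_density :: "real^'n^'n \<Rightarrow> real^'n \<Rightarrow> real" where
  "gauss_density S z =
     exp (- (z \<bullet> (matrix_inv S *v z)) / 2) / sqrt ((2 * pi) ^ CARD('n) * det S)"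

definition smoothed_density :: "(real^'n) measure \<Rightarrow> real^'n^'n \<Rightarrow> real^'n \<Rightarrow> real" where
  "smoothed_density p0 S x = (\<integral>y. gauss_density S (x - y) \<partial>p0)"

definition grad :: "(real^'n \<Rightarrow> real) \<Rightarrow> real^'n \<Rightarrow> real^'n" where
  "grad f x = (\<chi> k. deriv (\<lambda>h. f (x + h *\<^sub>R axis k 1)) 0)"

definition score :: "(real^'n \<Rightarrow> real) \<Rightarrow> real^'n \<Rightarrow> real^'n" where
  "score p = grad (\<lambda>x. ln (p x))"

definition pderiv_param :: "(real^'c \<Rightarrow> 'b::real_normed_vector) \<Rightarrow> real^'c \<Rightarrow> 'c \<Rightarrow> 'b" where
  "pderiv_param F \<theta> j = vector_derivative (\<lambda>h. F (\<theta> + h *\<^sub>R axis j 1)) (at 0)"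

definition dderiv2 :: "(real \<Rightarrow> real \<Rightarrow> 'b::real_normed_vector) \<Rightarrow> 'b" where
  "dderiv2 g = vector_derivative (\<lambda>r. vector_derivative (\<lambda>s. g r s) (at 0)) (at 0)"

definition std_normal_vec :: "(real^'n) measure" where
  "std_normal_vec = density lborel (\<lambda>e. ennreal (\<Prod>k\<in>UNIV. std_normal_density (e $ k)))"

definition time_deriv :: "(real \<Rightarrow> real^'c \<Rightarrow> real^'n^'n) \<Rightarrow> real \<Rightarrow> real \<Rightarrow> real^'c \<Rightarrow> real^'n^'n" where
  "time_deriv M T \<tau> \<theta> = vector_derivative (\<lambda>u. M u \<theta>) (at \<tau> within {0..T})"

definition score_loss ::
  "(real^'n) measure \<Rightarrow> (real \<Rightarrow> real^'c \<Rightarrow> real^'n^'n) \<Rightarrow> real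
   \<Rightarrow> (real^'n \<Rightarrow> real \<Rightarrow> 'p \<Rightarrow> real^'n) \<Rightarrow> real^'c \<Rightarrow> 'p \<Rightarrow> ennreal" where
  "score_loss p0 M T s \<theta> \<phi> =
     (\<integral>\<^sup>+ \<tau>. indicator {0..T} \<tau> / ennreal T *
        (\<integral>\<^sup>+ x0. (\<integral>\<^sup>+ \<epsilon>.
           ennreal ((norm (matrix_inv (msqrt (mat 1 + M \<tau> \<theta>)) ** time_deriv M T \<tau> \<theta>
                     ** msqrt (M \<tau> \<theta>)
                     *v (msqrt (M \<tau> \<theta>) *v s (x0 + msqrt (M \<tau> \<theta>) *v \<epsilon>) \<tau> \<phi> + \<epsilon>)))\<^sup>2)
         \<partial>std_normal_vec) \<partial>p0) \<partial>lborel)"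

end

(*
  With Q the inverse of S, the smoothed density p = p0 * N(0, S) is, up to a constant factor, the
  convolution gconv of p0 with the kernel exp (- z \<bullet> Q z / 2). Its derivatives in x and along a
  curve S h of covariances can be taken under the integral sign, the integrands being polynomials
  times Gaussians, so they are integrals of the kernel moments (a \<bullet> Q z) (b \<bullet> Q z) ...; for the
  h-derivative one uses Q' = - Q S' Q. Up to the normalising constant, which the score does not
  see, this is the heat equation  d/dh p = 1/2 \<Sum>i. D(e i) D(S' e i) p,  D(v) being the derivative
  in direction v. For the score g = grad p / p the claimed identity
  d/dh g = 1/2 \<Sum>i. D(e i) D(S' e i) g + D(S' g) g  then follows by the quotient rule, as an
  algebraic identity between moment integrals.
*)

theory Submission
  imports Defs
begin

lemma has_real_derivative_integral_dominated:
  fixes \<mu> :: "'a measure" and f :: "real \<Rightarrow> 'a \<Rightarrow> real"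
  assumes "finite_measure \<mu>" and "\<delta> > 0"
    and meas: "\<And>h. f h \<in> borel_measurable \<mu>"
    and bounded: "\<And>h y. \<bar>h\<bar> < \<delta> \<Longrightarrow> \<bar>f h y\<bar> \<le> C"
    and deriv: "\<And>y. y \<in> space \<mu> \<Longrightarrow> ((\<lambda>h. f h y) has_real_derivative f' y) (at 0)"
    and meas': "f' \<in> borel_measurable \<mu>"
    and lipschitz: "\<And>h y. \<bar>h\<bar> < \<delta> \<Longrightarrow> y \<in> space \<mu> \<Longrightarrow> \<bar>f h y - f 0 y\<bar> \<le> B * \<bar>h\<bar>"
  shows "((\<lambda>h. \<integral>y. f h y \<partial>\<mu>) has_real_derivative (\<integral>y. f' y \<partial>\<mu>)) (at 0)"
proof -
  interpret finite_measure \<mu> by fact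
  have integrable: "integrable \<mu> (f h)" if "\<bar>h\<bar> < \<delta>" for h
    using meas bounded[OF that] by (intro integrable_const_bound[where B=C]) auto
  define q where "q h y = (f h y - f 0 y) / h" for h y
  show ?thesis
    unfolding has_field_derivative_iff
  proof (subst tendsto_at_iff_sequentially, intro allI impI)
    fix X :: "nat \<Rightarrow> real"
    assume X: "\<forall>i. X i \<in> UNIV - {0}" "X \<longlonglongrightarrow> 0"
    obtain N where N: "\<And>n. n \<ge> N \<Longrightarrow> \<bar>X n\<bar> < \<delta>"
      using X(2) \<open>\<delta> > 0\<close> unfolding LIMSEQ_def dist_real_def by auto
    have quotient: "((\<lambda>h. ((\<integral>y. f h y \<partial>\<mu>) - (\<integral>y. f 0 y \<partial>\<mu>)) / (h - 0)) \<circ> X) (n + N)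
        = (\<integral>y. q (X (n + N)) y \<partial>\<mu>)" for n
      unfolding q_def o_def using integrable[OF N[of "n + N"]] integrable[of 0] \<open>\<delta> > 0\<close> by simp
    have "(\<lambda>n. \<integral>y. q (X (n + N)) y \<partial>\<mu>) \<longlonglongrightarrow> (\<integral>y. f' y \<partial>\<mu>)"
    proof (rule integral_dominated_convergence[where w="\<lambda>_. B"])
      show "AE y in \<mu>. (\<lambda>n. q (X (n + N)) y) \<longlonglongrightarrow> f' y"
      proof (rule AE_I2)
        fix y assume "y \<in> space \<mu>"
        then have "((\<lambda>h. (f h y - f 0 y) / (h - 0)) \<longlongrightarrow> f' y) (at 0)"
          using deriv unfolding has_field_derivative_iff by blast
        then have "(\<lambda>n. q (X n) y) \<longlonglongrightarrow> f' y"
          using X unfolding q_def by (subst (asm) tendsto_at_iff_sequentially) (auto simp: o_def)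
        then show "(\<lambda>n. q (X (n + N)) y) \<longlonglongrightarrow> f' y"
          by (rule LIMSEQ_ignore_initial_segment)
      qed
      show "AE y in \<mu>. norm (q (X (n + N)) y) \<le> B" for n
        using lipschitz[OF N] X(1) by (intro AE_I2) (auto simp: q_def abs_divide divide_le_eq)
    qed (use meas meas' in \<open>auto simp: q_def\<close>)
    then show "((\<lambda>h. ((\<integral>y. f h y \<partial>\<mu>) - (\<integral>y. f 0 y \<partial>\<mu>)) / (h - 0)) \<circ> X) \<longlonglongrightarrow> (\<integral>y. f' y \<partial>\<mu>)"
      unfolding quotient[symmetric] by (rule LIMSEQ_offset)
  qed
qed

lemma has_vector_derivative_cart:
  fixes f :: "real \<Rightarrow> real^'n"
  assumes "\<And>k. ((\<lambda>h. f h $ k) has_real_derivative f' $ k) (at a)"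
  shows "(f has_vector_derivative f') (at a)"
  unfolding has_vector_derivative_def
proof (subst has_derivative_componentwise_within, intro ballI)
  fix i :: "real^'n" assume "i \<in> Basis"
  then obtain k where i: "i = axis k 1" by (auto simp: Basis_vec_def)
  have "(\<lambda>x. (x *\<^sub>R f') \<bullet> i) = (*) (f' $ k)"
    by (auto simp: i inner_axis)
  then show "((\<lambda>x. f x \<bullet> i) has_derivative (\<lambda>x. (x *\<^sub>R f') \<bullet> i)) (at a)"
    using assms[of k] by (simp add: i inner_axis has_field_derivative_def)
qed

lemma has_vector_derivative_eventually_lipschitz:
  fixes f :: "real \<Rightarrow> 'a::real_normed_vector"
  assumes "(f has_vector_derivative f') (at 0)"
  shows "\<forall>\<^sub>F h in at 0. norm (f h - f 0) \<le> (norm f' + 1) * \<bar>h\<bar>"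
proof -
  have "((\<lambda>h. norm (f h - f 0 - h *\<^sub>R f') / norm h) \<longlongrightarrow> 0) (at 0)"
    using assms unfolding has_vector_derivative_def has_derivative_at by simp
  then have "\<forall>\<^sub>F h in at 0. norm (f h - f 0 - h *\<^sub>R f') / norm h < 1"
    by (rule order_tendstoD) simp
  moreover have "\<forall>\<^sub>F h in at (0::real). h \<noteq> 0"
    by (simp add: eventually_at_filter)
  ultimately show ?thesis
  proof eventually_elim
    case (elim h)
    then have "norm (f h - f 0 - h *\<^sub>R f') \<le> \<bar>h\<bar>"
      by (simp add: divide_less_eq)
    then show ?case
      using norm_triangle_ineq[of "f h - f 0 - h *\<^sub>R f'" "h *\<^sub>R f'"]
      by (simp add: algebra_simps)
  qed
qed

lemma borel_measurable_continuous_on_UNIV: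
  assumes "sets \<mu> = sets borel" "continuous_on UNIV g"
  shows "g \<in> borel_measurable \<mu>"
  using borel_measurable_continuous_onI[OF assms(2)] measurable_cong_sets[OF assms(1) refl] by blast

lemma power_mult_exp_neg_square_le:
  fixes r c :: real
  assumes "c > 0" "r \<ge> 0"
  shows "r ^ k * exp (- c * r\<^sup>2) \<le> exp (real k ^ 2 / (4 * c))"
proof (cases "k = 0")
  case True then show ?thesis using assms by simp
next
  case False
  define b where "b = c / real k"
  have b: "b > 0" using assms False by (simp add: b_def)
  have "r \<le> b * r\<^sup>2 + 1 / (4 * b)"
  proof -
    have "0 \<le> b * (r - 1 / (2 * b))\<^sup>2" using b by simp
    also have "\<dots> = b * r\<^sup>2 - r + 1 / (4 * b)"
      using b by (simp add: power2_eq_square field_simps)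
    finally show ?thesis by simp
  qed
  also have "\<dots> \<le> exp (b * r\<^sup>2 + 1 / (4 * b))"
    using exp_ge_add_one_self[of "b * r\<^sup>2 + 1 / (4 * b)"] by linarith
  finally have "r ^ k \<le> exp (b * r\<^sup>2 + 1 / (4 * b)) ^ k"
    using assms(2) by (rule power_mono)
  also have "\<dots> = exp (c * r\<^sup>2 + real k ^ 2 / (4 * c))"
    using False assms by (simp add: b_def field_simps power2_eq_square flip: exp_of_nat_mult)
  finally have "r ^ k * exp (- c * r\<^sup>2) \<le> exp (c * r\<^sup>2 + real k ^ 2 / (4 * c)) * exp (- c * r\<^sup>2)"
    by (rule mult_right_mono) simp
  then show ?thesis by (simp flip: exp_add)
qed

lemma has_vector_derivative_difference_quotient:
  fixes f :: "real \<Rightarrow> 'a::real_normed_vector"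
  assumes "(f has_vector_derivative f') (at 0)"
  shows "((\<lambda>h. (f h - f 0) /\<^sub>R h) \<longlongrightarrow> f') (at 0)"
proof -
  have "((\<lambda>h. norm (f h - f 0 - h *\<^sub>R f') / norm h) \<longlongrightarrow> 0) (at 0)"
    using assms unfolding has_vector_derivative_def has_derivative_at by simp
  moreover have "\<forall>\<^sub>F h in at 0. norm (f h - f 0 - h *\<^sub>R f') / norm h = norm ((f h - f 0) /\<^sub>R h - f')"
    unfolding eventually_at_filter
  proof (intro always_eventually allI impI)
    fix h :: real assume "h \<noteq> 0"
    then have "(f h - f 0) /\<^sub>R h - f' = (1 / h) *\<^sub>R (f h - f 0 - h *\<^sub>R f')"
      by (simp add: scaleR_diff_right divide_inverse)
    then show "norm (f h - f 0 - h *\<^sub>R f') / norm h = norm ((f h - f 0) /\<^sub>R h - f')"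
      by (simp add: divide_inverse mult.commute)
  qed
  ultimately have "((\<lambda>h. norm ((f h - f 0) /\<^sub>R h - f')) \<longlongrightarrow> 0) (at 0)"
    using tendsto_cong by force
  then show ?thesis by (simp add: tendsto_norm_zero_iff LIM_zero_iff)
qed

lemma power_mult_exp_bounded:
  fixes l :: real
  assumes "l > 0"
  obtains B where "\<And>z::'a::real_normed_vector. norm z ^ k * exp (- l * (norm z)\<^sup>2 / 2) \<le> B"
proof
  fix z :: 'a
  have "norm z ^ k * exp (- (l / 2) * (norm z)\<^sup>2) \<le> exp (real k ^ 2 / (4 * (l / 2)))"
    using assms by (intro power_mult_exp_neg_square_le) auto
  then show "norm z ^ k * exp (- l * (norm z)\<^sup>2 / 2) \<le> exp (real k ^ 2 / (4 * (l / 2)))"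
    by simp
qed

lemma abs_exp_neg_diff_le:
  fixes a b c :: real
  assumes "a \<ge> c" "b \<ge> c"
  shows "\<bar>exp (- a) - exp (- b)\<bar> \<le> \<bar>a - b\<bar> * exp (- c)"
proof -
  have main: "exp (- q) - exp (- p) \<le> (p - q) * exp (- c)" if "p \<ge> q" "q \<ge> c" for p q
  proof -
    have "exp (- q) - exp (- p) = exp (- q) * (1 - exp (- (p - q)))"
      by (simp add: algebra_simps flip: exp_add)
    also have "\<dots> \<le> exp (- q) * (p - q)"
    proof (rule mult_left_mono)
      show "1 - exp (- (p - q)) \<le> p - q"
        using exp_ge_add_one_self[of "- (p - q)"] by linarith
    qed simp
    also have "\<dots> \<le> exp (- c) * (p - q)"
      using that by (intro mult_right_mono) auto
    finally show ?thesis by (simp add: mult.commute)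
  qed
  show ?thesis
    using main[of a b] main[of b a] assms by (cases "a \<ge> b") (auto simp: abs_if)
qed

lemma norm_matrix_vector_mult_le:
  fixes A :: "real^'n^'m"
  shows "norm (A *v x) \<le> norm A * norm x"
proof -
  have "norm (A *v x) = L2_set (\<lambda>i. norm (A $ i \<bullet> x)) UNIV"
    by (simp add: norm_vec_def matrix_mult_dot)
  also have "\<dots> \<le> L2_set (\<lambda>i. norm (A $ i) * norm x) UNIV"
    by (rule L2_set_mono) (auto simp: Cauchy_Schwarz_ineq2)
  also have "\<dots> = norm A * norm x"
    by (simp add: norm_vec_def L2_set_left_distrib)
  finally show ?thesis .
qed

lemma abs_inner_matrix_vector_le:
  fixes A :: "real^'n^'m"
  shows "\<bar>a \<bullet> (A *v z)\<bar> \<le> norm A * norm a * norm z"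
proof -
  have "\<bar>a \<bullet> (A *v z)\<bar> \<le> norm a * norm (A *v z)" by (rule Cauchy_Schwarz_ineq2)
  also have "\<dots> \<le> norm a * (norm A * norm z)"
    by (intro mult_left_mono norm_matrix_vector_mult_le) auto
  finally show ?thesis by (simp add: ac_simps)
qed

lemma symmetric_inner_matrix_vector:
  fixes Q :: "real^'n^'n"
  assumes "transpose Q = Q"
  shows "x \<bullet> (Q *v y) = y \<bullet> (Q *v x)"
proof -
  have "x \<bullet> (Q *v y) = (x v* Q) \<bullet> y" by (simp add: dot_lmul_matrix)
  also have "x v* Q = transpose Q *v x" by simp
  finally show ?thesis using assms by (simp add: inner_commute)
qed

lemma matrix_inv:
  fixes A :: "'a::semiring_1^'n^'m"
  assumes "invertible A"
  shows "A ** matrix_inv A = mat 1" "matrix_inv A ** A = mat 1"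
proof -
  have "A ** matrix_inv A = mat 1 \<and> matrix_inv A ** A = mat 1"
    using assms unfolding invertible_def matrix_inv_def by (rule someI_ex)
  then show "A ** matrix_inv A = mat 1" "matrix_inv A ** A = mat 1" by auto
qed

lemma matrix_inv_vector_cancel:
  fixes A :: "'a::comm_semiring_1^'n^'n"
  assumes "invertible A"
  shows "A *v (matrix_inv A *v z) = z" "matrix_inv A *v (A *v z) = z"
  using matrix_inv[OF assms] by (simp_all add: matrix_vector_mul_assoc)

lemma transpose_matrix_inv_symmetric:
  fixes A :: "'a::comm_semiring_1^'n^'n"
  assumes "invertible A" "transpose A = A"
  shows "transpose (matrix_inv A) = matrix_inv A"
proof -
  have "transpose (matrix_inv A) ** A = mat 1"
    using matrix_inv(1)[OF assms(1)] assms(2) by (metis matrix_transpose_mul transpose_mat)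
  then have "transpose (matrix_inv A) = transpose (matrix_inv A) ** (A ** matrix_inv A)"
    using matrix_inv(1)[OF assms(1)] by simp
  also have "\<dots> = matrix_inv A"
    by (simp add: matrix_mul_assoc \<open>transpose (matrix_inv A) ** A = mat 1\<close>)
  finally show ?thesis .
qed

lemma sym_pd_invertible:
  fixes S :: "real^'n^'n"
  assumes "sym_pd S"
  shows "invertible S"
proof -
  have "S *v v = 0 \<Longrightarrow> v = 0" for v
    using assms unfolding sym_pd_def by (metis inner_zero_right less_irrefl)
  then show ?thesis
    using matrix_left_invertible_ker invertible_left_inverse by blast
qed

lemma sym_pd_matrix_inv:
  fixes S :: "real^'n^'n"
  assumes "sym_pd S"
  shows "sym_pd (matrix_inv S)"
  unfolding sym_pd_def
proof (intro conjI allI impI)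
  have "invertible S" using assms by (rule sym_pd_invertible)
  then show "transpose (matrix_inv S) = matrix_inv S"
    using assms transpose_matrix_inv_symmetric unfolding sym_pd_def by blast
  fix z :: "real^'n" assume "z \<noteq> 0"
  define w where "w = matrix_inv S *v z"
  have Sw: "S *v w = z"
    unfolding w_def by (rule matrix_inv_vector_cancel(1)[OF \<open>invertible S\<close>])
  then have "w \<noteq> 0" using \<open>z \<noteq> 0\<close> by auto
  then have "w \<bullet> (S *v w) > 0"
    using assms unfolding sym_pd_def by blast
  then show "z \<bullet> (matrix_inv S *v z) > 0"
    using Sw by (simp add: w_def inner_commute)
qed

text \<open>The determinant cannot vanish on the segment of positive definite matrices from
  the identity to \<open>S\<close>, so by the intermediate value theorem it keeps the sign of \<open>det (mat 1)\<close>.\<close>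

lemma sym_pd_det_pos:
  fixes S :: "real^'n^'n"
  assumes "sym_pd S"
  shows "det S > 0"
proof (rule ccontr)
  assume "\<not> det S > 0"
  define A where "A t = t *\<^sub>R S + (1 - t) *\<^sub>R mat 1" for t :: real
  have "continuous_on {0..1} (\<lambda>t. det (A t))"
    unfolding A_def det_def by (intro continuous_intros)
  then obtain t where t: "t \<in> {0..1}" "det (A t) = 0"
    using IVT2'[of "\<lambda>t. det (A t)" 1 0 0] \<open>\<not> det S > 0\<close> by (force simp: A_def)
  have "sym_pd (A t)"
    unfolding sym_pd_def
  proof (intro conjI allI impI)
    show "transpose (A t) = A t"
      using assms unfolding A_def sym_pd_def by (simp add: transpose_def vec_eq_iff mat_def)
    fix v :: "real^'n" assume "v \<noteq> 0"
    have "v \<bullet> (A t *v v) = t * (v \<bullet> (S *v v)) + (1 - t) * (v \<bullet> v)"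
      unfolding A_def
      by (simp add: matrix_vector_mult_add_rdistrib inner_add_right flip: scaleR_matrix_vector_assoc)
    moreover have "v \<bullet> (S *v v) > 0" "v \<bullet> v > 0"
      using assms \<open>v \<noteq> 0\<close> unfolding sym_pd_def by auto
    ultimately show "v \<bullet> (A t *v v) > 0"
      using t(1) by (cases "t = 0") (auto intro: add_pos_nonneg)
  qed
  then have "det (A t) \<noteq> 0"
    using sym_pd_invertible invertible_det_nz by blast
  with t(2) show False by contradiction
qed

definition coercive :: "real \<Rightarrow> real^'n^'n \<Rightarrow> bool" where
  "coercive l Q \<longleftrightarrow> l > 0 \<and> (\<forall>z. l * (norm z)\<^sup>2 \<le> z \<bullet> (Q *v z))"

lemma sym_pd_coercive:
  fixes Q :: "real^'n^'n"
  assumes "sym_pd Q"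
  obtains l where "coercive l Q"
proof -
  have "continuous_on (sphere 0 1) (\<lambda>z::real^'n. z \<bullet> (Q *v z))"
    by (intro continuous_intros)
  then obtain z0 where z0: "z0 \<in> sphere 0 1" "\<And>y. y \<in> sphere 0 1 \<Longrightarrow> z0 \<bullet> (Q *v z0) \<le> y \<bullet> (Q *v y)"
    using continuous_attains_inf[of "sphere (0::real^'n) 1"] by fastforce
  define l where "l = z0 \<bullet> (Q *v z0)"
  have "z0 \<noteq> 0" using z0(1) by auto
  then have "l > 0"
    using assms unfolding l_def sym_pd_def by blast
  moreover have "l * (norm z)\<^sup>2 \<le> z \<bullet> (Q *v z)" for z
  proof (cases "z = 0")
    case False
    have "l \<le> (z /\<^sub>R norm z) \<bullet> (Q *v (z /\<^sub>R norm z))"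
      unfolding l_def by (rule z0(2)) (simp add: False)
    also have "\<dots> = (z \<bullet> (Q *v z)) / (norm z)\<^sup>2"
      by (simp add: matrix_vector_mult_scaleR power2_eq_square divide_inverse)
    finally show ?thesis using False by (simp add: pos_le_divide_eq)
  qed simp
  ultimately show ?thesis using that unfolding coercive_def by blast
qed

lemma abs_quadratic_form_le:
  fixes A :: "real^'n^'n"
  assumes "\<And>z. norm (A *v z) \<le> \<epsilon> * norm z"
  shows "\<bar>z \<bullet> (A *v z)\<bar> \<le> \<epsilon> * (norm z)\<^sup>2"
  using order_trans[OF Cauchy_Schwarz_ineq2 mult_left_mono[OF assms[of z]], of z]
  by (simp add: power2_eq_square ac_simps)

lemma coercive_perturb:
  fixes Q0 Q1 :: "real^'n^'n"
  assumes "coercive l Q0" and close: "\<And>z. norm ((Q1 - Q0) *v z) \<le> \<epsilon> * norm z" and "\<epsilon> \<le> l / 2"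
  shows "coercive (l / 2) Q1"
  unfolding coercive_def
proof (intro conjI allI)
  show "l / 2 > 0"
    using assms(1) unfolding coercive_def by simp
  fix z
  have "\<bar>z \<bullet> ((Q1 - Q0) *v z)\<bar> \<le> \<epsilon> * (norm z)\<^sup>2"
    by (rule abs_quadratic_form_le[OF close])
  also have "\<dots> \<le> l / 2 * (norm z)\<^sup>2"
    using assms(3) by (intro mult_right_mono) auto
  finally have "\<bar>z \<bullet> ((Q1 - Q0) *v z)\<bar> \<le> l / 2 * (norm z)\<^sup>2" .
  moreover have "z \<bullet> (Q1 *v z) = z \<bullet> (Q0 *v z) + z \<bullet> ((Q1 - Q0) *v z)"
    by (simp add: matrix_vector_mult_diff_rdistrib inner_diff_right)
  moreover have "l * (norm z)\<^sup>2 \<le> z \<bullet> (Q0 *v z)"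
    using assms(1) unfolding coercive_def by blast
  ultimately show "l / 2 * (norm z)\<^sup>2 \<le> z \<bullet> (Q1 *v z)"
    by (simp add: abs_le_iff)
qed

lemma norm_matrix_inv_coercive_le:
  fixes A :: "real^'n^'n"
  assumes "coercive l A" "invertible A"
  shows "norm (matrix_inv A *v u) \<le> norm u / l"
proof -
  define v where "v = matrix_inv A *v u"
  have "l > 0"
    using assms(1) unfolding coercive_def by simp
  have "l * (norm v)\<^sup>2 \<le> v \<bullet> (A *v v)"
    using assms(1) unfolding coercive_def by blast
  also have "v \<bullet> (A *v v) = v \<bullet> u"
    unfolding v_def by (simp add: matrix_inv_vector_cancel(1)[OF assms(2)])
  also have "\<dots> \<le> norm v * norm u"
    by (rule order_trans[OF abs_ge_self Cauchy_Schwarz_ineq2])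
  finally have "l * (norm v * norm v) \<le> norm v * norm u"
    by (simp add: power2_eq_square)
  then show ?thesis
    using \<open>l > 0\<close> by (cases "norm v = 0") (auto simp: v_def field_simps)
qed

lemma bounded_linear_matrix_vector_mult_left:
  fixes w :: "real^'n"
  shows "bounded_linear (\<lambda>A :: real^'n^'m. A *v w)"
  by (rule bounded_linear_intro[where K="norm w"])
    (auto simp: matrix_vector_mult_add_rdistrib scaleR_matrix_vector_assoc norm_matrix_vector_mult_le)

lemma continuous_on_matrix_vector_mult [continuous_intros]:
  fixes A :: "real^'n^'m"
  shows "continuous_on S f \<Longrightarrow> continuous_on S (\<lambda>x. A *v f x)"
  by (rule continuous_on_compose2[OF linear_continuous_on[OF matrix_vector_mul_bounded_linear]]) auto

lemma matrix_vector_mult_columns: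
  fixes A :: "real^'n^'m"
  shows "A *v u = (\<Sum>i\<in>UNIV. u $ i *\<^sub>R (A *v axis i 1))"
  by (simp add: vec_eq_iff matrix_vector_mult_def axis_def if_distrib cong: if_cong)
    (simp add: mult.commute)

lemma quadratic_form_axis_sum:
  fixes D :: "real^'n^'n"
  shows "u \<bullet> (D *v u) = (\<Sum>i\<in>UNIV. (axis i 1 \<bullet> u) * ((D *v axis i 1) \<bullet> u))"
  by (subst (1) matrix_vector_mult_columns)
    (simp add: inner_sum_right inner_axis inner_axis' inner_commute)

section \<open>The Gaussian kernel and its moments\<close>

text \<open>With \<open>Q = S\<^sup>-\<^sup>1\<close>, \<open>gker Q\<close> is the density of \<open>N(0, S)\<close> without its normalising constant.
  Each further factor \<open>a \<bullet> (Q *v z)\<close> comes from one more derivative of the kernel.\<close>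

definition gker :: "real^'n^'n \<Rightarrow> real^'n \<Rightarrow> real" where
  "gker Q z = exp (- (z \<bullet> (Q *v z)) / 2)"

definition gker1 :: "real^'n^'n \<Rightarrow> real^'n \<Rightarrow> real^'n \<Rightarrow> real" where
  "gker1 Q a z = (a \<bullet> (Q *v z)) * gker Q z"

definition gker2 :: "real^'n^'n \<Rightarrow> real^'n \<Rightarrow> real^'n \<Rightarrow> real^'n \<Rightarrow> real" where
  "gker2 Q a b z = (a \<bullet> (Q *v z)) * (b \<bullet> (Q *v z)) * gker Q z"

definition gker3 :: "real^'n^'n \<Rightarrow> real^'n \<Rightarrow> real^'n \<Rightarrow> real^'n \<Rightarrow> real^'n \<Rightarrow> real" where
  "gker3 Q a b c z = (a \<bullet> (Q *v z)) * (b \<bullet> (Q *v z)) * (c \<bullet> (Q *v z)) * gker Q z"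

lemma gker_pos: "gker Q z > 0"
  by (simp add: gker_def)

lemma gker_le_exp:
  assumes "coercive l Q"
  shows "gker Q z \<le> exp (- l * (norm z)\<^sup>2 / 2)"
proof -
  have "l * (norm z)\<^sup>2 \<le> z \<bullet> (Q *v z)"
    using assms unfolding coercive_def by blast
  then show ?thesis unfolding gker_def by simp
qed

lemma gker_le_1:
  assumes "coercive l Q"
  shows "gker Q z \<le> 1"
proof -
  have "exp (- l * (norm z)\<^sup>2 / 2) \<le> 1"
    using assms unfolding coercive_def by simp
  then show ?thesis using gker_le_exp[OF assms, of z] by linarith
qed

lemma poly_mult_gker_bounded:
  fixes Q :: "real^'n^'n"
  assumes "coercive l Q" and P: "\<And>z. \<bar>P z\<bar> \<le> \<alpha> * norm z ^ k"
  obtains C where "\<And>z. \<bar>P z * gker Q z\<bar> \<le> C"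
proof -
  obtain B where B: "\<And>z::real^'n. norm z ^ k * exp (- l * (norm z)\<^sup>2 / 2) \<le> B"
    using power_mult_exp_bounded assms(1) unfolding coercive_def by blast
  have "\<bar>P z * gker Q z\<bar> \<le> \<bar>\<alpha>\<bar> * B" for z
  proof -
    have "\<bar>P z * gker Q z\<bar> \<le> (\<bar>\<alpha>\<bar> * norm z ^ k) * gker Q z"
    proof -
      have "\<bar>P z\<bar> \<le> \<bar>\<alpha>\<bar> * norm z ^ k"
        using P[of z] by (smt (verit) mult_right_mono norm_ge_zero zero_le_power)
      then show ?thesis
        using gker_pos[of Q z] by (simp add: abs_mult mult_right_mono)
    qed
    also have "\<dots> \<le> \<bar>\<alpha>\<bar> * (norm z ^ k * exp (- l * (norm z)\<^sup>2 / 2))"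
      using gker_le_exp[OF assms(1)] by (simp add: mult.assoc mult_left_mono)
    also have "\<dots> \<le> \<bar>\<alpha>\<bar> * B"
      using B[of z] by (simp add: mult_left_mono)
    finally show ?thesis .
  qed
  then show ?thesis using that by blast
qed

lemma gker_bounded:
  assumes "sym_pd Q"
  obtains C where "\<And>z. \<bar>gker Q z\<bar> \<le> C"
  using sym_pd_coercive[OF assms] poly_mult_gker_bounded[of _ Q "\<lambda>_. 1" 1 0] by auto

lemma gker1_bounded:
  assumes "sym_pd Q"
  obtains C where "\<And>z. \<bar>gker1 Q a z\<bar> \<le> C"
proof -
  have "\<bar>a \<bullet> (Q *v z)\<bar> \<le> (norm Q * norm a) * norm z ^ 1" for z
    using abs_inner_matrix_vector_le[of a Q z] by simp
  from sym_pd_coercive[OF assms] poly_mult_gker_bounded[OF _ this] show ?thesis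
    using that unfolding gker1_def by blast
qed

lemma gker2_bounded:
  assumes "sym_pd Q"
  obtains C where "\<And>z. \<bar>gker2 Q a b z\<bar> \<le> C"
proof -
  have "\<bar>(a \<bullet> (Q *v z)) * (b \<bullet> (Q *v z))\<bar> \<le> ((norm Q * norm a) * (norm Q * norm b)) * norm z ^ 2" for z
  proof -
    have "\<bar>(a \<bullet> (Q *v z)) * (b \<bullet> (Q *v z))\<bar> \<le> (norm Q * norm a * norm z) * (norm Q * norm b * norm z)"
      unfolding abs_mult by (intro mult_mono abs_inner_matrix_vector_le) auto
    then show ?thesis by (simp add: power2_eq_square ac_simps)
  qed
  from sym_pd_coercive[OF assms] poly_mult_gker_bounded[OF _ this] show ?thesis
    using that unfolding gker2_def by blast
qed

lemma gker3_bounded: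
  assumes "sym_pd Q"
  obtains C where "\<And>z. \<bar>gker3 Q a b c z\<bar> \<le> C"
proof -
  have "\<bar>(a \<bullet> (Q *v z)) * (b \<bullet> (Q *v z)) * (c \<bullet> (Q *v z))\<bar>
      \<le> ((norm Q * norm a) * (norm Q * norm b) * (norm Q * norm c)) * norm z ^ 3" for z
  proof -
    have "\<bar>(a \<bullet> (Q *v z)) * (b \<bullet> (Q *v z)) * (c \<bullet> (Q *v z))\<bar>
        \<le> (norm Q * norm a * norm z) * (norm Q * norm b * norm z) * (norm Q * norm c * norm z)"
      unfolding abs_mult by (intro mult_mono abs_inner_matrix_vector_le mult_nonneg_nonneg) auto
    then show ?thesis by (simp add: power3_eq_cube ac_simps)
  qed
  from sym_pd_coercive[OF assms] poly_mult_gker_bounded[OF _ this] show ?thesis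
    using that unfolding gker3_def by blast
qed

lemma continuous_on_gker [continuous_intros]:
  "continuous_on S f \<Longrightarrow> continuous_on S (\<lambda>x. gker Q (f x))"
  unfolding gker_def by (intro continuous_intros) auto

lemma gker_continuous: "continuous_on UNIV (gker Q)"
  and gker1_continuous: "continuous_on UNIV (gker1 Q a)"
  and gker2_continuous: "continuous_on UNIV (gker2 Q a b)"
  and gker3_continuous: "continuous_on UNIV (gker3 Q a b c)"
  unfolding gker1_def gker2_def gker3_def by (intro continuous_intros; simp)+

lemma inner_matrix_vector_line:
  fixes Q :: "real^'n^'m"
  shows "a \<bullet> (Q *v (z + h *\<^sub>R w)) = a \<bullet> (Q *v z) + h * (a \<bullet> (Q *v w))"
  unfolding matrix_vector_right_distrib matrix_vector_mult_scaleR inner_add_right inner_scaleR_right ..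

lemma quadratic_form_line:
  fixes Q :: "real^'n^'n"
  assumes "transpose Q = Q"
  shows "(z + h *\<^sub>R w) \<bullet> (Q *v (z + h *\<^sub>R w))
       = z \<bullet> (Q *v z) + h * (2 * (w \<bullet> (Q *v z))) + h\<^sup>2 * (w \<bullet> (Q *v w))"
  using symmetric_inner_matrix_vector[OF assms, of z w]
  by (simp add: matrix_vector_right_distrib matrix_vector_mult_scaleR inner_add_right
      inner_add_left power2_eq_square algebra_simps)

lemma gker_has_derivative_line:
  fixes Q :: "real^'n^'n"
  assumes "transpose Q = Q"
  shows "((\<lambda>h. gker Q (z + h *\<^sub>R w)) has_real_derivative - gker1 Q w z) (at 0)"
proof -
  have "((\<lambda>h. exp (- (z \<bullet> (Q *v z) + h * (2 * (w \<bullet> (Q *v z))) + h\<^sup>2 * (w \<bullet> (Q *v w))) / 2))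
      has_real_derivative - gker1 Q w z) (at 0)"
    by (auto intro!: derivative_eq_intros simp: gker1_def gker_def)
  then show ?thesis
    unfolding gker_def quadratic_form_line[OF assms] .
qed

lemma gker1_has_derivative_line:
  fixes Q :: "real^'n^'n"
  assumes "transpose Q = Q"
  shows "((\<lambda>h. gker1 Q a (z + h *\<^sub>R w)) has_real_derivative
           (a \<bullet> (Q *v w)) * gker Q z - gker2 Q a w z) (at 0)"
proof -
  have "((\<lambda>h. (a \<bullet> (Q *v z) + h * (a \<bullet> (Q *v w))) * gker Q (z + h *\<^sub>R w)) has_real_derivative
      (a \<bullet> (Q *v w)) * gker Q z - gker2 Q a w z) (at 0)"
    by (auto intro!: derivative_eq_intros gker_has_derivative_line[OF assms]
        simp: gker1_def gker2_def algebra_simps)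
  then show ?thesis
    unfolding gker1_def inner_matrix_vector_line .
qed

lemma gker2_has_derivative_line:
  fixes Q :: "real^'n^'n"
  assumes "transpose Q = Q"
  shows "((\<lambda>h. gker2 Q a b (z + h *\<^sub>R w)) has_real_derivative
           (a \<bullet> (Q *v w)) * gker1 Q b z + (b \<bullet> (Q *v w)) * gker1 Q a z - gker3 Q a b w z) (at 0)"
proof -
  have "((\<lambda>h. (a \<bullet> (Q *v z) + h * (a \<bullet> (Q *v w))) * (b \<bullet> (Q *v z) + h * (b \<bullet> (Q *v w)))
        * gker Q (z + h *\<^sub>R w)) has_real_derivative
      (a \<bullet> (Q *v w)) * gker1 Q b z + (b \<bullet> (Q *v w)) * gker1 Q a z - gker3 Q a b w z) (at 0)"
    by (auto intro!: derivative_eq_intros gker_has_derivative_line[OF assms]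
        simp: gker1_def gker2_def gker3_def algebra_simps)
  then show ?thesis
    unfolding gker2_def inner_matrix_vector_line .
qed

lemma gker_diff_le:
  assumes "coercive l Q1" "coercive l Q0"
  shows "\<bar>gker Q1 z - gker Q0 z\<bar> \<le> \<bar>z \<bullet> ((Q1 - Q0) *v z)\<bar> / 2 * exp (- l * (norm z)\<^sup>2 / 2)"
proof -
  have "z \<bullet> (Q1 *v z) / 2 \<ge> l * (norm z)\<^sup>2 / 2" "z \<bullet> (Q0 *v z) / 2 \<ge> l * (norm z)\<^sup>2 / 2"
    using assms unfolding coercive_def by (auto simp: divide_right_mono)
  from abs_exp_neg_diff_le[OF this]
  have "\<bar>gker Q1 z - gker Q0 z\<bar> \<le> \<bar>z \<bullet> (Q1 *v z) / 2 - z \<bullet> (Q0 *v z) / 2\<bar> * exp (- (l * (norm z)\<^sup>2 / 2))"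
    unfolding gker_def by simp
  also have "z \<bullet> (Q1 *v z) / 2 - z \<bullet> (Q0 *v z) / 2 = z \<bullet> ((Q1 - Q0) *v z) / 2"
    by (simp add: matrix_vector_mult_diff_rdistrib inner_diff_right diff_divide_distrib)
  finally show ?thesis by (simp add: abs_divide)
qed

lemma gker_diff_lipschitz:
  assumes "coercive l Q1" "coercive l Q0" and close: "\<And>z. norm ((Q1 - Q0) *v z) \<le> \<epsilon> * norm z"
  shows "\<bar>gker Q1 z - gker Q0 z\<bar> \<le> \<epsilon> / 2 * (norm z ^ 2 * exp (- l * (norm z)\<^sup>2 / 2))"
proof -
  have "\<bar>z \<bullet> ((Q1 - Q0) *v z)\<bar> \<le> \<epsilon> * norm z ^ 2"
    by (rule abs_quadratic_form_le[OF close])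
  have "\<bar>gker Q1 z - gker Q0 z\<bar> \<le> \<bar>z \<bullet> ((Q1 - Q0) *v z)\<bar> / 2 * exp (- l * (norm z)\<^sup>2 / 2)"
    by (rule gker_diff_le[OF assms(1,2)])
  also have "\<dots> \<le> \<epsilon> * norm z ^ 2 / 2 * exp (- l * (norm z)\<^sup>2 / 2)"
    using \<open>\<bar>z \<bullet> ((Q1 - Q0) *v z)\<bar> \<le> \<epsilon> * norm z ^ 2\<close>
    by (intro mult_right_mono divide_right_mono) auto
  finally show ?thesis
    by (simp add: ac_simps)
qed

lemma gker1_diff_lipschitz:
  assumes "coercive l Q1" "coercive l Q0" and close: "\<And>z. norm ((Q1 - Q0) *v z) \<le> \<epsilon> * norm z"
    and "\<epsilon> \<ge> 0"
  shows "\<bar>gker1 Q1 a z - gker1 Q0 a z\<bar>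
    \<le> \<epsilon> * norm a * (norm z ^ 1 * exp (- l * (norm z)\<^sup>2 / 2))
      + \<epsilon> * norm Q0 * norm a / 2 * (norm z ^ 3 * exp (- l * (norm z)\<^sup>2 / 2))"
proof -
  let ?e = "exp (- l * (norm z)\<^sup>2 / 2)"
  have split: "gker1 Q1 a z - gker1 Q0 a z
      = (a \<bullet> ((Q1 - Q0) *v z)) * gker Q1 z + (a \<bullet> (Q0 *v z)) * (gker Q1 z - gker Q0 z)"
    unfolding gker1_def by (simp add: matrix_vector_mult_diff_rdistrib inner_diff_right algebra_simps)
  have "\<bar>a \<bullet> ((Q1 - Q0) *v z)\<bar> \<le> norm a * (\<epsilon> * norm z)"
    using order_trans[OF Cauchy_Schwarz_ineq2 mult_left_mono[OF close[of z]], of a] by simp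
  then have "\<bar>a \<bullet> ((Q1 - Q0) *v z)\<bar> * gker Q1 z \<le> (norm a * (\<epsilon> * norm z)) * ?e"
    using gker_le_exp[OF assms(1), of z] gker_pos[of Q1 z] \<open>\<epsilon> \<ge> 0\<close>
    by (intro mult_mono) auto
  then have first: "\<bar>(a \<bullet> ((Q1 - Q0) *v z)) * gker Q1 z\<bar> \<le> \<epsilon> * norm a * (norm z ^ 1 * ?e)"
    using gker_pos[of Q1 z] by (simp add: abs_mult ac_simps)
  have "\<bar>a \<bullet> (Q0 *v z)\<bar> \<le> norm Q0 * norm a * norm z"
    by (rule abs_inner_matrix_vector_le)
  then have second: "\<bar>(a \<bullet> (Q0 *v z)) * (gker Q1 z - gker Q0 z)\<bar>
      \<le> (norm Q0 * norm a * norm z) * (\<epsilon> / 2 * (norm z ^ 2 * ?e))"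
    unfolding abs_mult using gker_diff_lipschitz[OF assms(1-3), of z]
    by (intro mult_mono) auto
  moreover have "(norm Q0 * norm a * norm z) * (\<epsilon> / 2 * (norm z ^ 2 * ?e))
      = \<epsilon> * norm Q0 * norm a / 2 * (norm z ^ 3 * ?e)"
    by (simp add: power2_eq_square power3_eq_cube)
  ultimately show ?thesis
    using first abs_triangle_ineq[of "(a \<bullet> ((Q1 - Q0) *v z)) * gker Q1 z"
        "(a \<bullet> (Q0 *v z)) * (gker Q1 z - gker Q0 z)"]
    unfolding split by linarith
qed

lemma sum_gker2_axis:
  fixes D :: "real^'n^'n"
  shows "(\<Sum>i\<in>UNIV. gker2 Q (axis i 1) (D *v axis i 1) z) = ((Q *v z) \<bullet> (D *v (Q *v z))) * gker Q z"
  unfolding gker2_def quadratic_form_axis_sum[of "Q *v z" D]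
  by (simp add: sum_distrib_right inner_commute)

lemma sum_gker3_axis:
  fixes D :: "real^'n^'n"
  shows "(\<Sum>i\<in>UNIV. gker3 Q a (axis i 1) (D *v axis i 1) z)
    = (a \<bullet> (Q *v z)) * ((Q *v z) \<bullet> (D *v (Q *v z))) * gker Q z"
  unfolding gker3_def quadratic_form_axis_sum[of "Q *v z" D]
  by (simp add: sum_distrib_right sum_distrib_left inner_commute ac_simps)

section \<open>Convolution with the Gaussian kernel\<close>

lemma has_real_derivative_convolution_param:
  fixes F :: "real \<Rightarrow> real^'n \<Rightarrow> real"
  assumes "prob_space \<mu>" "sets \<mu> = sets borel" "\<delta> > 0"
    and cont: "\<And>h. continuous_on UNIV (F h)" "continuous_on UNIV F'"
    and bounded: "\<And>z. \<bar>F 0 z\<bar> \<le> C"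
    and deriv: "\<And>z. ((\<lambda>h. F h z) has_real_derivative F' z) (at 0)"
    and lipschitz: "\<And>h z. \<bar>h\<bar> < \<delta> \<Longrightarrow> \<bar>F h z - F 0 z\<bar> \<le> B * \<bar>h\<bar>"
  shows "((\<lambda>h. \<integral>y. F h (x - y) \<partial>\<mu>) has_real_derivative (\<integral>y. F' (x - y) \<partial>\<mu>)) (at 0)"
proof (rule has_real_derivative_integral_dominated[where C="C + \<bar>B\<bar> * \<delta>" and \<delta>=\<delta> and B=B])
  interpret prob_space \<mu> by fact
  show "finite_measure \<mu>" by unfold_locales
  show "(\<lambda>y. F h (x - y)) \<in> borel_measurable \<mu>" for h
    using assms(2) by (intro borel_measurable_continuous_on_UNIV continuous_on_compose2[OF cont(1)])
      (auto intro!: continuous_intros)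
  show "(\<lambda>y. F' (x - y)) \<in> borel_measurable \<mu>"
    using assms(2) by (intro borel_measurable_continuous_on_UNIV continuous_on_compose2[OF cont(2)])
      (auto intro!: continuous_intros)
  show "\<bar>F h (x - y)\<bar> \<le> C + \<bar>B\<bar> * \<delta>" if "\<bar>h\<bar> < \<delta>" for h y
  proof -
    have "B * \<bar>h\<bar> \<le> \<bar>B\<bar> * \<delta>"
      using that by (intro order_trans[OF mult_right_mono[OF abs_ge_self] mult_left_mono]) auto
    then show ?thesis
      using bounded[of "x - y"] lipschitz[OF that, of "x - y"] by linarith
  qed
qed (use assms in auto)

lemma has_real_derivative_convolution_line:
  fixes k k' :: "real^'n \<Rightarrow> real"
  assumes "prob_space \<mu>" "sets \<mu> = sets borel"
    and k: "continuous_on UNIV k" "\<And>z. \<bar>k z\<bar> \<le> C"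
    and k': "continuous_on UNIV k'" "\<And>z. \<bar>k' z\<bar> \<le> C'"
    and deriv: "\<And>z. ((\<lambda>h. k (z + h *\<^sub>R w)) has_real_derivative k' z) (at 0)"
  shows "((\<lambda>h. \<integral>y. k (x + h *\<^sub>R w - y) \<partial>\<mu>) has_real_derivative (\<integral>y. k' (x - y) \<partial>\<mu>)) (at 0)"
proof -
  have "((\<lambda>h. \<integral>y. k ((x - y) + h *\<^sub>R w) \<partial>\<mu>) has_real_derivative (\<integral>y. k' (x - y) \<partial>\<mu>)) (at 0)"
  proof (rule has_real_derivative_convolution_param[where F="\<lambda>h z. k (z + h *\<^sub>R w)" and \<delta>=1 and B=C'])
    show "continuous_on UNIV (\<lambda>z. k (z + h *\<^sub>R w))" for h
      by (intro continuous_on_compose2[OF k(1)]) (auto intro!: continuous_intros)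
    show "\<bar>k (z + h *\<^sub>R w) - k (z + 0 *\<^sub>R w)\<bar> \<le> C' * \<bar>h\<bar>" for h z
    proof -
      have "((\<lambda>h. k (z + h *\<^sub>R w)) has_real_derivative k' (z + t *\<^sub>R w)) (at t)" for t
        using deriv[of "z + t *\<^sub>R w"] DERIV_shift[of "\<lambda>h. k (z + h *\<^sub>R w)" _ 0 t]
        by (simp add: scaleR_add_left algebra_simps)
      then have "norm (k (z + h *\<^sub>R w) - k (z + 0 *\<^sub>R w)) \<le> C' * norm (h - 0)"
        using k'(2) by (intro field_differentiable_bound[of UNIV]) auto
      then show ?thesis by simp
    qed
  qed (use assms in auto)
  then show ?thesis
    by (simp add: algebra_simps)
qed

definition gconv :: "(real^'n) measure \<Rightarrow> real^'n^'n \<Rightarrow> real^'n \<Rightarrow> real" where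
  "gconv \<mu> Q x = (\<integral>y. gker Q (x - y) \<partial>\<mu>)"

definition gconv1 :: "(real^'n) measure \<Rightarrow> real^'n^'n \<Rightarrow> real^'n \<Rightarrow> real^'n \<Rightarrow> real" where
  "gconv1 \<mu> Q a x = (\<integral>y. gker1 Q a (x - y) \<partial>\<mu>)"

definition gconv2 :: "(real^'n) measure \<Rightarrow> real^'n^'n \<Rightarrow> real^'n \<Rightarrow> real^'n \<Rightarrow> real^'n \<Rightarrow> real" where
  "gconv2 \<mu> Q a b x = (\<integral>y. gker2 Q a b (x - y) \<partial>\<mu>)"

definition gconv3 ::
  "(real^'n) measure \<Rightarrow> real^'n^'n \<Rightarrow> real^'n \<Rightarrow> real^'n \<Rightarrow> real^'n \<Rightarrow> real^'n \<Rightarrow> real" where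
  "gconv3 \<mu> Q a b c x = (\<integral>y. gker3 Q a b c (x - y) \<partial>\<mu>)"

locale gauss_conv =
  fixes \<mu> :: "(real^'n) measure" and Q :: "real^'n^'n"
  assumes prob: "prob_space \<mu>" and sets_borel: "sets \<mu> = sets borel" and pd: "sym_pd Q"
begin

lemma symmetric: "transpose Q = Q"
  using pd unfolding sym_pd_def by blast

lemma integrable_bounded_continuous:
  fixes k :: "real^'n \<Rightarrow> real"
  assumes "continuous_on UNIV k" "\<And>z. \<bar>k z\<bar> \<le> C"
  shows "integrable \<mu> (\<lambda>y. k (x - y))"
proof -
  interpret prob_space \<mu> by (rule prob)
  show ?thesis
    using sets_borel assms
    by (intro integrable_const_bound[where B=C] borel_measurable_continuous_on_UNIV
        continuous_on_compose2[OF assms(1)]) (auto intro!: continuous_intros)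
qed

lemma integrable_gker: "integrable \<mu> (\<lambda>y. gker Q (x - y))"
  and integrable_gker1: "integrable \<mu> (\<lambda>y. gker1 Q a (x - y))"
  and integrable_gker2: "integrable \<mu> (\<lambda>y. gker2 Q a b (x - y))"
  and integrable_gker3: "integrable \<mu> (\<lambda>y. gker3 Q a b c (x - y))"
  by (metis integrable_bounded_continuous gker_bounded gker1_bounded gker2_bounded gker3_bounded
      gker_continuous gker1_continuous gker2_continuous gker3_continuous pd)+

lemma gconv_pos: "gconv \<mu> Q x > 0"
proof -
  interpret prob_space \<mu> by (rule prob)
  have "gconv \<mu> Q x \<noteq> 0"
  proof
    assume "gconv \<mu> Q x = 0"
    then have "AE y in \<mu>. gker Q (x - y) = 0"
      unfolding gconv_def
      by (subst (asm) integral_nonneg_eq_0_iff_AE) (auto intro: integrable_gker less_imp_le gker_pos)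
    then have "AE y in \<mu>. False"
      by eventually_elim (simp add: gker_def)
    then show False by simp
  qed
  moreover have "gconv \<mu> Q x \<ge> 0"
    unfolding gconv_def by (intro integral_nonneg_AE) (auto intro: less_imp_le gker_pos)
  ultimately show ?thesis by simp
qed

lemma gconv_has_derivative_line:
  "((\<lambda>h. gconv \<mu> Q (x + h *\<^sub>R w)) has_real_derivative - gconv1 \<mu> Q w x) (at 0)"
proof -
  obtain C where "\<And>z. \<bar>gker Q z\<bar> \<le> C" using gker_bounded[OF pd] by blast
  moreover obtain C' where "\<And>z. \<bar>gker1 Q w z\<bar> \<le> C'" using gker1_bounded[OF pd] by blast
  ultimately have "((\<lambda>h. \<integral>y. gker Q (x + h *\<^sub>R w - y) \<partial>\<mu>) has_real_derivative
      (\<integral>y. - gker1 Q w (x - y) \<partial>\<mu>)) (at 0)"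
    by (intro has_real_derivative_convolution_line[OF prob sets_borel gker_continuous]
        gker_has_derivative_line[OF symmetric]) (auto intro!: continuous_intros gker1_continuous)
  then show ?thesis unfolding gconv_def gconv1_def by simp
qed

lemma gconv1_has_derivative_line:
  "((\<lambda>h. gconv1 \<mu> Q a (x + h *\<^sub>R w)) has_real_derivative
    (a \<bullet> (Q *v w)) * gconv \<mu> Q x - gconv2 \<mu> Q a w x) (at 0)"
proof -
  obtain C where "\<And>z. \<bar>gker1 Q a z\<bar> \<le> C" using gker1_bounded[OF pd] by blast
  moreover obtain C0 where C0: "\<And>z. \<bar>gker Q z\<bar> \<le> C0" using gker_bounded[OF pd] by blast
  moreover obtain C2 where C2: "\<And>z. \<bar>gker2 Q a w z\<bar> \<le> C2" using gker2_bounded[OF pd] by blast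
  moreover have "\<bar>(a \<bullet> (Q *v w)) * gker Q z - gker2 Q a w z\<bar> \<le> \<bar>a \<bullet> (Q *v w)\<bar> * C0 + C2" for z
    using abs_triangle_ineq4[of "(a \<bullet> (Q *v w)) * gker Q z" "gker2 Q a w z"]
      mult_left_mono[OF C0[of z], of "\<bar>a \<bullet> (Q *v w)\<bar>"] C2[of z]
    by (simp add: abs_mult)
  ultimately have "((\<lambda>h. \<integral>y. gker1 Q a (x + h *\<^sub>R w - y) \<partial>\<mu>) has_real_derivative
      (\<integral>y. (a \<bullet> (Q *v w)) * gker Q (x - y) - gker2 Q a w (x - y) \<partial>\<mu>)) (at 0)"
    by (intro has_real_derivative_convolution_line[OF prob sets_borel gker1_continuous]
        gker1_has_derivative_line[OF symmetric])
      (auto intro!: continuous_intros gker_continuous gker2_continuous)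
  then show ?thesis
    unfolding gconv_def gconv1_def gconv2_def by (simp add: integrable_gker integrable_gker2)
qed

lemma gconv2_has_derivative_line:
  "((\<lambda>h. gconv2 \<mu> Q a b (x + h *\<^sub>R w)) has_real_derivative
    (a \<bullet> (Q *v w)) * gconv1 \<mu> Q b x + (b \<bullet> (Q *v w)) * gconv1 \<mu> Q a x - gconv3 \<mu> Q a b w x) (at 0)"
proof -
  obtain C where "\<And>z. \<bar>gker2 Q a b z\<bar> \<le> C" using gker2_bounded[OF pd] by blast
  moreover obtain Ca where Ca: "\<And>z. \<bar>gker1 Q a z\<bar> \<le> Ca" using gker1_bounded[OF pd] by blast
  moreover obtain Cb where Cb: "\<And>z. \<bar>gker1 Q b z\<bar> \<le> Cb" using gker1_bounded[OF pd] by blast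
  moreover obtain C3 where C3: "\<And>z. \<bar>gker3 Q a b w z\<bar> \<le> C3" using gker3_bounded[OF pd] by blast
  moreover have "\<bar>(a \<bullet> (Q *v w)) * gker1 Q b z + (b \<bullet> (Q *v w)) * gker1 Q a z - gker3 Q a b w z\<bar>
      \<le> \<bar>a \<bullet> (Q *v w)\<bar> * Cb + \<bar>b \<bullet> (Q *v w)\<bar> * Ca + C3" for z
  proof -
    have "\<bar>(a \<bullet> (Q *v w)) * gker1 Q b z + (b \<bullet> (Q *v w)) * gker1 Q a z - gker3 Q a b w z\<bar>
        \<le> \<bar>a \<bullet> (Q *v w)\<bar> * \<bar>gker1 Q b z\<bar> + \<bar>b \<bullet> (Q *v w)\<bar> * \<bar>gker1 Q a z\<bar> + \<bar>gker3 Q a b w z\<bar>"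
      by (simp add: abs_mult[symmetric])
    also have "\<dots> \<le> \<bar>a \<bullet> (Q *v w)\<bar> * Cb + \<bar>b \<bullet> (Q *v w)\<bar> * Ca + C3"
      by (intro add_mono mult_left_mono Ca Cb C3) auto
    finally show ?thesis .
  qed
  ultimately have "((\<lambda>h. \<integral>y. gker2 Q a b (x + h *\<^sub>R w - y) \<partial>\<mu>) has_real_derivative
      (\<integral>y. (a \<bullet> (Q *v w)) * gker1 Q b (x - y) + (b \<bullet> (Q *v w)) * gker1 Q a (x - y)
        - gker3 Q a b w (x - y) \<partial>\<mu>)) (at 0)"
    by (intro has_real_derivative_convolution_line[OF prob sets_borel gker2_continuous]
        gker2_has_derivative_line[OF symmetric])
      (auto intro!: continuous_intros gker1_continuous gker3_continuous)
  then show ?thesis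
    unfolding gconv1_def gconv2_def gconv3_def by (simp add: integrable_gker1 integrable_gker3)
qed

end

definition score_formula :: "(real^'n) measure \<Rightarrow> real^'n^'n \<Rightarrow> real^'n \<Rightarrow> real^'n" where
  "score_formula \<mu> Q x = (\<chi> k. - gconv1 \<mu> Q (axis k 1) x / gconv \<mu> Q x)"

definition score_deriv :: "(real^'n) measure \<Rightarrow> real^'n^'n \<Rightarrow> real^'n \<Rightarrow> real^'n \<Rightarrow> real^'n" where
  "score_deriv \<mu> Q x v = (\<chi> k. - (axis k 1 \<bullet> (Q *v v)) + gconv2 \<mu> Q (axis k 1) v x / gconv \<mu> Q x
      - gconv1 \<mu> Q (axis k 1) x * gconv1 \<mu> Q v x / (gconv \<mu> Q x)\<^sup>2)"

definition score_deriv2 ::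
  "(real^'n) measure \<Rightarrow> real^'n^'n \<Rightarrow> real^'n \<Rightarrow> real^'n \<Rightarrow> real^'n \<Rightarrow> real^'n" where
  "score_deriv2 \<mu> Q x v w = (\<chi> k. - gconv3 \<mu> Q (axis k 1) v w x / gconv \<mu> Q x
      + (gconv2 \<mu> Q (axis k 1) v x * gconv1 \<mu> Q w x + gconv2 \<mu> Q (axis k 1) w x * gconv1 \<mu> Q v x
         + gconv1 \<mu> Q (axis k 1) x * gconv2 \<mu> Q v w x) / (gconv \<mu> Q x)\<^sup>2
      - 2 * gconv1 \<mu> Q (axis k 1) x * gconv1 \<mu> Q v x * gconv1 \<mu> Q w x / (gconv \<mu> Q x)^3)"

context gauss_conv
begin

lemma score_formula_has_derivative_line:
  "((\<lambda>\<sigma>. score_formula \<mu> Q (x + \<sigma> *\<^sub>R v)) has_vector_derivative score_deriv \<mu> Q x v) (at 0)"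
proof (rule has_vector_derivative_cart)
  fix k
  let ?e = "axis k 1 :: real^'n" and ?n = "gconv \<mu> Q x"
  have "?n \<noteq> 0" using gconv_pos[of x] by simp
  have "((\<lambda>\<sigma>. - gconv1 \<mu> Q ?e (x + \<sigma> *\<^sub>R v) / gconv \<mu> Q (x + \<sigma> *\<^sub>R v)) has_real_derivative
      (- ((?e \<bullet> (Q *v v)) * ?n - gconv2 \<mu> Q ?e v x) * ?n - (- gconv1 \<mu> Q ?e x) * (- gconv1 \<mu> Q v x))
        / (?n * ?n)) (at 0)"
    using DERIV_divide[OF DERIV_minus[OF gconv1_has_derivative_line] gconv_has_derivative_line] \<open>?n \<noteq> 0\<close>
    by simp
  moreover have "(- ((?e \<bullet> (Q *v v)) * ?n - gconv2 \<mu> Q ?e v x) * ?n - (- gconv1 \<mu> Q ?e x) * (- gconv1 \<mu> Q v x))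
        / (?n * ?n) = score_deriv \<mu> Q x v $ k"
    unfolding score_deriv_def using \<open>?n \<noteq> 0\<close> by (simp add: field_simps power2_eq_square)
  ultimately show "((\<lambda>\<sigma>. score_formula \<mu> Q (x + \<sigma> *\<^sub>R v) $ k) has_real_derivative score_deriv \<mu> Q x v $ k) (at 0)"
    unfolding score_formula_def by simp
qed

lemma score_deriv_has_derivative_line:
  "((\<lambda>r. score_deriv \<mu> Q (x + r *\<^sub>R w) v) has_vector_derivative score_deriv2 \<mu> Q x v w) (at 0)"
proof (rule has_vector_derivative_cart)
  fix k
  let ?e = "axis k 1 :: real^'n"
  let ?n = "\<lambda>r. gconv \<mu> Q (x + r *\<^sub>R w)"
  let ?A = "\<lambda>r. gconv1 \<mu> Q ?e (x + r *\<^sub>R w)"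
  let ?B = "\<lambda>r. gconv1 \<mu> Q v (x + r *\<^sub>R w)"
  let ?C = "\<lambda>r. gconv2 \<mu> Q ?e v (x + r *\<^sub>R w)"
  let ?A' = "(?e \<bullet> (Q *v w)) * ?n 0 - gconv2 \<mu> Q ?e w x"
  let ?B' = "(v \<bullet> (Q *v w)) * ?n 0 - gconv2 \<mu> Q v w x"
  let ?C' = "(?e \<bullet> (Q *v w)) * ?B 0 + (v \<bullet> (Q *v w)) * ?A 0 - gconv3 \<mu> Q ?e v w x"
  let ?n' = "- gconv1 \<mu> Q w x"
  have "?n 0 \<noteq> 0" using gconv_pos[of x] by simp
  have "((\<lambda>r. - (?e \<bullet> (Q *v v)) + ?C r / ?n r - ?A r * ?B r / (?n r)\<^sup>2) has_real_derivative
      (?C' * ?n 0 - ?C 0 * ?n') / (?n 0 * ?n 0)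
      - ((?A' * ?B 0 + ?B' * ?A 0) * (?n 0)\<^sup>2 - ?A 0 * ?B 0 * (2 * ?n 0 * ?n')) / ((?n 0)\<^sup>2 * (?n 0)\<^sup>2)) (at 0)"
    using gconv_has_derivative_line[of x w] gconv1_has_derivative_line[of ?e x w]
      gconv1_has_derivative_line[of v x w] gconv2_has_derivative_line[of ?e v x w] \<open>?n 0 \<noteq> 0\<close>
    by (auto intro!: derivative_eq_intros)
  moreover have "(?C' * ?n 0 - ?C 0 * ?n') / (?n 0 * ?n 0)
      - ((?A' * ?B 0 + ?B' * ?A 0) * (?n 0)\<^sup>2 - ?A 0 * ?B 0 * (2 * ?n 0 * ?n')) / ((?n 0)\<^sup>2 * (?n 0)\<^sup>2)
      = score_deriv2 \<mu> Q x v w $ k"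
    unfolding score_deriv2_def using \<open>?n 0 \<noteq> 0\<close>
    by (simp add: field_simps power2_eq_square power3_eq_cube)
  ultimately show "((\<lambda>r. score_deriv \<mu> Q (x + r *\<^sub>R w) v $ k) has_real_derivative score_deriv2 \<mu> Q x v w $ k) (at 0)"
    unfolding score_deriv_def by simp
qed

lemma dderiv2_score_formula:
  "dderiv2 (\<lambda>r \<sigma>. score_formula \<mu> Q (x + r *\<^sub>R w + \<sigma> *\<^sub>R v)) = score_deriv2 \<mu> Q x v w"
proof -
  have "vector_derivative (\<lambda>\<sigma>. score_formula \<mu> Q (x + r *\<^sub>R w + \<sigma> *\<^sub>R v)) (at 0)
      = score_deriv \<mu> Q (x + r *\<^sub>R w) v" for r
    by (rule vector_derivative_at[OF score_formula_has_derivative_line])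
  then show ?thesis
    unfolding dderiv2_def by (simp add: vector_derivative_at[OF score_deriv_has_derivative_line])
qed

end

lemma score_smoothed_density:
  fixes S :: "real^'n^'n"
  assumes "prob_space \<mu>" "sets \<mu> = sets borel" "sym_pd S"
  shows "score (smoothed_density \<mu> S) = score_formula \<mu> (matrix_inv S)"
proof
  fix x
  define Q where "Q = matrix_inv S"
  interpret gauss_conv \<mu> Q
    unfolding Q_def by (rule gauss_conv.intro[OF assms(1,2) sym_pd_matrix_inv[OF assms(3)]])
  define c where "c = sqrt ((2 * pi) ^ CARD('n) * det S)"
  have "c > 0" unfolding c_def using sym_pd_det_pos[OF assms(3)] by simp
  have density: "smoothed_density \<mu> S y = gconv \<mu> Q y / c" for y
    unfolding smoothed_density_def gauss_density_def gconv_def gker_def Q_def c_def by simp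
  show "score (smoothed_density \<mu> S) x = score_formula \<mu> (matrix_inv S) x"
    unfolding score_def grad_def score_formula_def Q_def[symmetric]
  proof (rule Cart_lambda_cong)
    fix k
    have pos: "gconv \<mu> Q (x + 0 *\<^sub>R axis k 1) > 0" by (rule gconv_pos)
    have "((\<lambda>h. ln (gconv \<mu> Q (x + h *\<^sub>R axis k 1) / c)) has_real_derivative
        (1 / (gconv \<mu> Q (x + 0 *\<^sub>R axis k 1) / c)) * (- gconv1 \<mu> Q (axis k 1) x / c)) (at 0)"
      using pos \<open>c > 0\<close> by (auto intro!: derivative_eq_intros gconv_has_derivative_line)
    then have "((\<lambda>h. ln (smoothed_density \<mu> S (x + h *\<^sub>R axis k 1))) has_real_derivative
        - gconv1 \<mu> Q (axis k 1) x / gconv \<mu> Q x) (at 0)"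
      using pos \<open>c > 0\<close> by (simp add: density)
    then show "deriv (\<lambda>h. ln (smoothed_density \<mu> S (x + h *\<^sub>R axis k 1))) 0
        = - gconv1 \<mu> Q (axis k 1) x / gconv \<mu> Q x"
      by (rule DERIV_imp_deriv)
  qed
qed

context gauss_conv
begin

definition gconv1_vec :: "real^'n \<Rightarrow> real^'n" where
  "gconv1_vec x = (\<chi> i. gconv1 \<mu> Q (axis i 1) x)"

lemma gconv1_eq_inner: "gconv1 \<mu> Q b x = b \<bullet> gconv1_vec x"
proof -
  have "gker1 Q b z = (\<Sum>i\<in>UNIV. b $ i * gker1 Q (axis i 1) z)" for z
    unfolding gker1_def
    by (subst (1) basis_expansion[of b, unfolded scalar_mult_eq_scaleR, symmetric])
      (simp add: inner_sum_left sum_distrib_right mult.assoc)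
  then have "gconv1 \<mu> Q b x = (\<Sum>i\<in>UNIV. b $ i * gconv1 \<mu> Q (axis i 1) x)"
    unfolding gconv1_def by (simp add: integrable_gker1)
  then show ?thesis
    by (simp add: gconv1_vec_def inner_vec_def)
qed

lemma gconv2_sum_right:
  "gconv2 \<mu> Q a (\<Sum>i\<in>UNIV. c i *\<^sub>R b i) x = (\<Sum>i\<in>UNIV. c i * gconv2 \<mu> Q a (b i) x)"
proof -
  have "gker2 Q a (\<Sum>i\<in>UNIV. c i *\<^sub>R b i) z = (\<Sum>i\<in>UNIV. c i * gker2 Q a (b i) z)" for z
    unfolding gker2_def by (simp add: inner_sum_left sum_distrib_left sum_distrib_right ac_simps)
  then show ?thesis
    unfolding gconv2_def by (simp add: integrable_gker2)
qed

lemma gconv2_scaleR_right: "gconv2 \<mu> Q a (c *\<^sub>R b) x = c * gconv2 \<mu> Q a b x"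
  unfolding gconv2_def gker2_def by (simp add: ac_simps)

lemma gconv2_commute: "gconv2 \<mu> Q a b x = gconv2 \<mu> Q b a x"
  unfolding gconv2_def gker2_def by (simp add: ac_simps)

lemma gconv3_commute: "gconv3 \<mu> Q a b c x = gconv3 \<mu> Q a c b x"
  unfolding gconv3_def gker3_def by (simp add: ac_simps)

lemma score_formula_eq: "score_formula \<mu> Q x = (- 1 / gconv \<mu> Q x) *\<^sub>R gconv1_vec x"
  unfolding score_formula_def gconv1_vec_def by (simp add: vec_eq_iff)

lemma sum_score_deriv2_component:
  fixes D :: "real^'n^'n" and x :: "real^'n" and k :: 'n
  assumes "transpose D = D"
  defines "n \<equiv> gconv \<mu> Q x" and "A \<equiv> gconv1_vec x"
  shows "(\<Sum>i\<in>UNIV. score_deriv2 \<mu> Q x (D *v axis i 1) (axis i 1) $ k)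
    = - (\<Sum>i\<in>UNIV. gconv3 \<mu> Q (axis k 1) (axis i 1) (D *v axis i 1) x) / n
      + (2 * gconv2 \<mu> Q (axis k 1) (D *v A) x
         + A $ k * (\<Sum>i\<in>UNIV. gconv2 \<mu> Q (axis i 1) (D *v axis i 1) x)) / n\<^sup>2
      - 2 * A $ k * ((D *v A) \<bullet> A) / n ^ 3"
proof -
  let ?e = "\<lambda>i. axis i 1 :: real^'n"
  have A: "gconv1 \<mu> Q b x = b \<bullet> A" for b
    unfolding A_def by (rule gconv1_eq_inner)
  have DA: "(D *v ?e i) \<bullet> A = (D *v A) $ i" for i
    using symmetric_inner_matrix_vector[OF assms(1), of A "?e i"] by (simp add: inner_commute inner_axis')
  have G1: "(\<Sum>i\<in>UNIV. gconv2 \<mu> Q (?e k) (D *v ?e i) x * A $ i) = gconv2 \<mu> Q (?e k) (D *v A) x"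
    by (subst (2) matrix_vector_mult_columns) (simp add: gconv2_sum_right mult.commute)
  have G2: "(\<Sum>i\<in>UNIV. gconv2 \<mu> Q (?e k) (?e i) x * ((D *v ?e i) \<bullet> A)) = gconv2 \<mu> Q (?e k) (D *v A) x"
    by (subst basis_expansion[of "D *v A", unfolded scalar_mult_eq_scaleR, symmetric])
      (simp add: gconv2_sum_right DA mult.commute)
  have H: "(\<Sum>i\<in>UNIV. ((D *v ?e i) \<bullet> A) * A $ i) = (D *v A) \<bullet> A"
    unfolding DA by (simp add: inner_vec_def)
  have "(\<Sum>i\<in>UNIV. score_deriv2 \<mu> Q x (D *v ?e i) (?e i) $ k)
    = (\<Sum>i\<in>UNIV. - gconv3 \<mu> Q (?e k) (?e i) (D *v ?e i) x / n
        + (gconv2 \<mu> Q (?e k) (D *v ?e i) x * A $ i + gconv2 \<mu> Q (?e k) (?e i) x * ((D *v ?e i) \<bullet> A)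
           + A $ k * gconv2 \<mu> Q (?e i) (D *v ?e i) x) / n\<^sup>2
        - 2 * A $ k * (((D *v ?e i) \<bullet> A) * A $ i) / n ^ 3)"
    unfolding score_deriv2_def n_def
    by (simp add: A inner_axis' gconv3_commute gconv2_commute[of "D *v _"] ac_simps)
  also have "\<dots> = - (\<Sum>i\<in>UNIV. gconv3 \<mu> Q (?e k) (?e i) (D *v ?e i) x) / n
      + ((\<Sum>i\<in>UNIV. gconv2 \<mu> Q (?e k) (D *v ?e i) x * A $ i)
         + (\<Sum>i\<in>UNIV. gconv2 \<mu> Q (?e k) (?e i) x * ((D *v ?e i) \<bullet> A))
         + A $ k * (\<Sum>i\<in>UNIV. gconv2 \<mu> Q (?e i) (D *v ?e i) x)) / n\<^sup>2
      - 2 * A $ k * (\<Sum>i\<in>UNIV. ((D *v ?e i) \<bullet> A) * A $ i) / n ^ 3"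
    by (simp add: sum.distrib sum_subtractf sum_negf sum_divide_distrib[symmetric]
        sum_distrib_left[symmetric])
  finally show ?thesis
    unfolding G1 G2 H by simp
qed

lemma score_deriv_along_score_component:
  fixes D :: "real^'n^'n" and x :: "real^'n" and k :: 'n
  assumes "transpose D = D"
  defines "n \<equiv> gconv \<mu> Q x" and "A \<equiv> gconv1_vec x"
  shows "score_deriv \<mu> Q x (D *v score_formula \<mu> Q x) $ k
    = gconv1 \<mu> Q (D *v (Q *v axis k 1)) x / n - gconv2 \<mu> Q (axis k 1) (D *v A) x / n\<^sup>2
      + A $ k * ((D *v A) \<bullet> A) / n ^ 3"
proof -
  have "n \<noteq> 0"
    using gconv_pos[of x] by (simp add: n_def)
  have "axis k 1 \<bullet> (Q *v (D *v A)) = (D *v A) \<bullet> (Q *v axis k 1)"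
    by (rule symmetric_inner_matrix_vector[OF symmetric])
  also have "\<dots> = (D *v (Q *v axis k 1)) \<bullet> A"
    using symmetric_inner_matrix_vector[OF assms(1), of "Q *v axis k 1" A] by (simp add: inner_commute)
  finally have c: "axis k 1 \<bullet> (Q *v (D *v A)) = gconv1 \<mu> Q (D *v (Q *v axis k 1)) x"
    by (simp add: gconv1_eq_inner A_def)
  show ?thesis
    unfolding score_deriv_def score_formula_eq A_def[symmetric] n_def[symmetric]
      matrix_vector_mult_scaleR gconv2_scaleR_right inner_scaleR_right
    using \<open>n \<noteq> 0\<close> c
    by (simp add: gconv1_eq_inner[of _ x] A_def[symmetric] inner_axis' field_simps
        power2_eq_square power3_eq_cube)
qed

end

section \<open>Perturbing the covariance\<close>

locale spd_curve =
  fixes m :: "real \<Rightarrow> real^'n^'n" and D :: "real^'n^'n"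
  assumes has_deriv: "(m has_vector_derivative D) (at 0)" and pd: "\<And>h. sym_pd (m h)"
begin

abbreviation Q :: "real \<Rightarrow> real^'n^'n" where
  "Q h \<equiv> matrix_inv (m h)"

lemma symmetric_deriv: "transpose D = D"
proof -
  have "linear (transpose :: real^'n^'n \<Rightarrow> real^'n^'n)"
    by (rule linearI) (simp_all add: transpose_def vec_eq_iff)
  then have "bounded_linear (transpose :: real^'n^'n \<Rightarrow> real^'n^'n)"
    by (simp add: linear_conv_bounded_linear)
  from bounded_linear.has_vector_derivative[OF this has_deriv]
  have "((\<lambda>h. transpose (m h)) has_vector_derivative transpose D) (at 0)" .
  moreover have "(\<lambda>h. transpose (m h)) = m"
    using pd unfolding sym_pd_def by auto
  ultimately show ?thesis
    using vector_derivative_unique_at[OF has_deriv] by metis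
qed

lemma Q_sym_pd: "sym_pd (Q h)"
  by (rule sym_pd_matrix_inv[OF pd])

lemma Q_symmetric: "transpose (Q h) = Q h"
  using Q_sym_pd unfolding sym_pd_def by blast

lemma m_Q_cancel: "m h *v (Q h *v u) = u" "Q h *v (m h *v u) = u"
  using matrix_inv_vector_cancel[OF sym_pd_invertible[OF pd]] by auto

lemma Q_diff: "(Q h - Q 0) *v z = Q h *v ((m 0 - m h) *v (Q 0 *v z))"
  by (simp add: matrix_vector_mult_diff_rdistrib matrix_vector_mult_diff_distrib m_Q_cancel)

lemma eventually_Q_bounded:
  obtains L where "L \<ge> 0" "\<forall>\<^sub>F h in at 0. \<forall>u. norm (Q h *v u) \<le> L * norm u"
proof -
  obtain l where l: "coercive l (m 0)"
    using sym_pd_coercive[OF pd] by blast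
  then have "l > 0" unfolding coercive_def by simp
  have "((\<lambda>h. norm (m h - m 0)) \<longlongrightarrow> 0) (at 0)"
    using has_vector_derivative_continuous[OF has_deriv]
    by (simp add: continuous_at LIM_zero tendsto_norm_zero)
  then have "\<forall>\<^sub>F h in at 0. norm (m h - m 0) < l / 2"
    using \<open>l > 0\<close> by (intro order_tendstoD) auto
  moreover have "norm (Q h *v u) \<le> (2 / l) * norm u" if "norm (m h - m 0) < l / 2" for h u
  proof -
    have "coercive (l / 2) (m h)"
      by (rule coercive_perturb[OF l norm_matrix_vector_mult_le]) (use that in simp)
    from norm_matrix_inv_coercive_le[OF this sym_pd_invertible[OF pd], of u]
    show ?thesis by (simp add: ac_simps)
  qed
  ultimately have "\<forall>\<^sub>F h in at 0. \<forall>u. norm (Q h *v u) \<le> (2 / l) * norm u"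
    by (auto elim: eventually_mono)
  then show ?thesis
    using that[of "2 / l"] \<open>l > 0\<close> by simp
qed

lemma eventually_Q_lipschitz:
  obtains C where "C \<ge> 0" "\<forall>\<^sub>F h in at 0. \<forall>z. norm ((Q h - Q 0) *v z) \<le> C * \<bar>h\<bar> * norm z"
proof -
  obtain L where L: "L \<ge> 0" "\<forall>\<^sub>F h in at 0. \<forall>u. norm (Q h *v u) \<le> L * norm u"
    using eventually_Q_bounded by blast
  have C: "L * (norm D + 1) * norm (Q 0) \<ge> 0"
    using L(1) by simp
  have "\<forall>\<^sub>F h in at 0. \<forall>z. norm ((Q h - Q 0) *v z) \<le> (L * (norm D + 1) * norm (Q 0)) * \<bar>h\<bar> * norm z"
    using L(2) has_vector_derivative_eventually_lipschitz[OF has_deriv]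
  proof eventually_elim
    case (elim h)
    show ?case
    proof
      fix z
    have "norm ((m 0 - m h) *v (Q 0 *v z)) \<le> norm (m 0 - m h) * norm (Q 0 *v z)"
      by (rule norm_matrix_vector_mult_le)
    also have "\<dots> \<le> ((norm D + 1) * \<bar>h\<bar>) * (norm (Q 0) * norm z)"
      using elim(2) by (intro mult_mono norm_matrix_vector_mult_le) (auto simp: norm_minus_commute)
    finally have "L * norm ((m 0 - m h) *v (Q 0 *v z)) \<le> L * (((norm D + 1) * \<bar>h\<bar>) * (norm (Q 0) * norm z))"
      using L(1) by (rule mult_left_mono)
    moreover have "norm ((Q h - Q 0) *v z) \<le> L * norm ((m 0 - m h) *v (Q 0 *v z))"
      unfolding Q_diff using elim(1) by blast
    ultimately show "norm ((Q h - Q 0) *v z) \<le> L * (norm D + 1) * norm (Q 0) * \<bar>h\<bar> * norm z"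
      by (simp add: ac_simps)
    qed
  qed
  with C show ?thesis
    by (rule that)
qed

lemma Q_local_control:
  obtains \<delta> C l where "\<delta> > 0" "C \<ge> 0"
    "\<And>h z. \<bar>h\<bar> < \<delta> \<Longrightarrow> norm ((Q h - Q 0) *v z) \<le> C * \<bar>h\<bar> * norm z"
    "\<And>h. \<bar>h\<bar> < \<delta> \<Longrightarrow> coercive l (Q h)"
proof -
  obtain l where l: "coercive l (Q 0)"
    using sym_pd_coercive[OF Q_sym_pd] by blast
  then have "l > 0" unfolding coercive_def by simp
  obtain C where "C \<ge> 0" and "\<forall>\<^sub>F h in at 0. \<forall>z. norm ((Q h - Q 0) *v z) \<le> C * \<bar>h\<bar> * norm z"
    using eventually_Q_lipschitz by blast
  then obtain d where "d > 0"
    and d: "\<And>h z. h \<noteq> 0 \<Longrightarrow> \<bar>h\<bar> < d \<Longrightarrow> norm ((Q h - Q 0) *v z) \<le> C * \<bar>h\<bar> * norm z"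
    unfolding eventually_at by (auto simp: dist_real_def)
  define \<delta> where "\<delta> = min d (l / (2 * (C + 1)))"
  have "\<delta> > 0"
    unfolding \<delta>_def using \<open>d > 0\<close> \<open>l > 0\<close> \<open>C \<ge> 0\<close> by simp
  have close: "norm ((Q h - Q 0) *v z) \<le> (C * \<bar>h\<bar>) * norm z" if "\<bar>h\<bar> < \<delta>" for h z
    using d[of h z] that by (cases "h = 0") (auto simp: \<delta>_def)
  have "coercive (l / 2) (Q h)" if "\<bar>h\<bar> < \<delta>" for h
  proof (rule coercive_perturb[OF l close[OF that]])
    have "C * \<bar>h\<bar> \<le> (C + 1) * (l / (2 * (C + 1)))"
      using that \<open>C \<ge> 0\<close> by (intro mult_mono) (auto simp: \<delta>_def)
    also have "\<dots> = l / 2"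
      using \<open>C \<ge> 0\<close> by (simp add: field_simps add_nonneg_eq_0_iff)
    finally show "C * \<bar>h\<bar> \<le> l / 2" .
  qed
  with \<open>\<delta> > 0\<close> \<open>C \<ge> 0\<close> close show ?thesis
    using that by blast
qed

lemma tendsto_Q: "((\<lambda>h. Q h *v a) \<longlongrightarrow> Q 0 *v a) (at 0)"
proof -
  obtain C where "\<forall>\<^sub>F h in at 0. \<forall>z. norm ((Q h - Q 0) *v z) \<le> C * \<bar>h\<bar> * norm z"
    using eventually_Q_lipschitz by blast
  then have "\<forall>\<^sub>F h in at 0. norm ((Q h - Q 0) *v a) \<le> C * \<bar>h\<bar> * norm a"
    by eventually_elim blast
  moreover have "((\<lambda>h. C * \<bar>h\<bar> * norm a) \<longlongrightarrow> 0) (at (0::real))"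
    by (auto intro!: tendsto_eq_intros)
  ultimately have "((\<lambda>h. (Q h - Q 0) *v a) \<longlongrightarrow> 0) (at 0)"
    by (rule Lim_null_comparison)
  then show ?thesis
    by (simp add: matrix_vector_mult_diff_rdistrib LIM_zero_iff)
qed

text \<open>Since \<open>Q h - Q 0 = Q h (m 0 - m h) Q 0\<close>, the symmetry of \<open>Q h\<close> moves \<open>Q h\<close> onto \<open>a\<close>,
  and the difference quotient becomes an inner product of two convergent terms.\<close>

lemma inner_Q_has_derivative:
  "((\<lambda>h. a \<bullet> (Q h *v z)) has_real_derivative - ((Q 0 *v a) \<bullet> (D *v (Q 0 *v z)))) (at 0)"
  unfolding has_field_derivative_iff
proof -
  define w where "w = Q 0 *v z"
  have quotient: "((\<lambda>h. (m h *v w - m 0 *v w) /\<^sub>R h) \<longlongrightarrow> D *v w) (at 0)"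
    using has_vector_derivative_difference_quotient[OF
        bounded_linear.has_vector_derivative[OF bounded_linear_matrix_vector_mult_left has_deriv]] .
  have "\<forall>\<^sub>F h in at 0. (Q h *v a) \<bullet> (- ((m h *v w - m 0 *v w) /\<^sub>R h))
      = (a \<bullet> (Q h *v z) - a \<bullet> (Q 0 *v z)) / (h - 0)"
    unfolding eventually_at_filter
  proof (intro always_eventually allI impI)
    fix h :: real
    have "a \<bullet> (Q h *v z) - a \<bullet> (Q 0 *v z) = a \<bullet> (Q h *v ((m 0 - m h) *v w))"
      by (simp add: w_def flip: Q_diff inner_diff_right matrix_vector_mult_diff_rdistrib)
    also have "\<dots> = ((m 0 - m h) *v w) \<bullet> (Q h *v a)"
      by (rule symmetric_inner_matrix_vector[OF Q_symmetric])
    also have "\<dots> = - ((m h *v w - m 0 *v w) \<bullet> (Q h *v a))"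
      by (simp add: matrix_vector_mult_diff_rdistrib inner_diff_left)
    finally show "(Q h *v a) \<bullet> (- ((m h *v w - m 0 *v w) /\<^sub>R h))
        = (a \<bullet> (Q h *v z) - a \<bullet> (Q 0 *v z)) / (h - 0)"
      by (simp add: inner_commute divide_inverse)
  qed
  moreover have "((\<lambda>h. (Q h *v a) \<bullet> (- ((m h *v w - m 0 *v w) /\<^sub>R h)))
      \<longlongrightarrow> (Q 0 *v a) \<bullet> (- (D *v w))) (at 0)"
    by (intro tendsto_inner tendsto_Q tendsto_minus quotient)
  ultimately show "((\<lambda>h. (a \<bullet> (Q h *v z) - a \<bullet> (Q 0 *v z)) / (h - 0))
      \<longlongrightarrow> - ((Q 0 *v a) \<bullet> (D *v (Q 0 *v z)))) (at 0)"
    unfolding w_def using tendsto_cong by force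
qed

lemma gker_Q_has_derivative:
  "((\<lambda>h. gker (Q h) z) has_real_derivative
     (\<Sum>i\<in>UNIV. gker2 (Q 0) (axis i 1) (D *v axis i 1) z) / 2) (at 0)"
  unfolding gker_def sum_gker2_axis
  by (auto intro!: derivative_eq_intros inner_Q_has_derivative[of z z])

lemma gker1_Q_has_derivative:
  "((\<lambda>h. gker1 (Q h) a z) has_real_derivative
     - gker1 (Q 0) (D *v (Q 0 *v a)) z + (\<Sum>i\<in>UNIV. gker3 (Q 0) a (axis i 1) (D *v axis i 1) z) / 2) (at 0)"
proof -
  have "(Q 0 *v a) \<bullet> (D *v (Q 0 *v z)) = (D *v (Q 0 *v a)) \<bullet> (Q 0 *v z)"
    using symmetric_inner_matrix_vector[OF symmetric_deriv, of "Q 0 *v a" "Q 0 *v z"]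
    by (simp add: inner_commute)
  then show ?thesis
    unfolding gker1_def sum_gker3_axis
    by (auto intro!: derivative_eq_intros inner_Q_has_derivative gker_Q_has_derivative
        simp: sum_gker2_axis algebra_simps)
qed

end

context spd_curve
begin

context
  fixes \<mu> :: "(real^'n) measure"
  assumes prob: "prob_space \<mu>" and sets_borel: "sets \<mu> = sets borel"
begin

lemma gconv_Q_has_derivative:
  "((\<lambda>h. gconv \<mu> (Q h) x) has_real_derivative
     (\<Sum>i\<in>UNIV. gconv2 \<mu> (Q 0) (axis i 1) (D *v axis i 1) x) / 2) (at 0)"
proof -
  obtain \<delta> C l where "\<delta> > 0" "C \<ge> 0"
    and close: "\<And>h z. \<bar>h\<bar> < \<delta> \<Longrightarrow> norm ((Q h - Q 0) *v z) \<le> C * \<bar>h\<bar> * norm z"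
    and coercive: "\<And>h. \<bar>h\<bar> < \<delta> \<Longrightarrow> coercive l (Q h)"
    using Q_local_control by blast
  have "l > 0"
    using coercive[of 0] \<open>\<delta> > 0\<close> unfolding coercive_def by simp
  obtain B where B: "\<And>z::real^'n. norm z ^ 2 * exp (- l * (norm z)\<^sup>2 / 2) \<le> B"
    using power_mult_exp_bounded[OF \<open>l > 0\<close>] by blast
  interpret gauss_conv \<mu> "Q 0"
    by (rule gauss_conv.intro[OF prob sets_borel Q_sym_pd])
  have "((\<lambda>h. \<integral>y. gker (Q h) (x - y) \<partial>\<mu>) has_real_derivative
      (\<integral>y. (\<Sum>i\<in>UNIV. gker2 (Q 0) (axis i 1) (D *v axis i 1) (x - y)) / 2 \<partial>\<mu>)) (at 0)"
  proof (rule has_real_derivative_convolution_param[OF prob sets_borel \<open>\<delta> > 0\<close>])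
    show "\<bar>gker (Q 0) z\<bar> \<le> 1" for z
      using gker_le_1[OF coercive, of 0] gker_pos[of "Q 0" z] \<open>\<delta> > 0\<close> by simp
    show "\<bar>gker (Q h) z - gker (Q 0) z\<bar> \<le> C * B / 2 * \<bar>h\<bar>" if "\<bar>h\<bar> < \<delta>" for h z
    proof -
      have "\<bar>gker (Q h) z - gker (Q 0) z\<bar> \<le> C * \<bar>h\<bar> / 2 * (norm z ^ 2 * exp (- l * (norm z)\<^sup>2 / 2))"
        using gker_diff_lipschitz[OF coercive[OF that] coercive close[OF that]] \<open>\<delta> > 0\<close> by simp
      also have "\<dots> \<le> C * \<bar>h\<bar> / 2 * B"
        using B \<open>C \<ge> 0\<close> by (intro mult_left_mono) auto
      finally show ?thesis by (simp add: ac_simps)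
    qed
  qed (auto intro!: continuous_intros gker_continuous gker2_continuous gker_Q_has_derivative)
  then show ?thesis
    unfolding gconv_def gconv2_def by (simp add: integrable_gker2 Bochner_Integration.integral_sum)
qed

lemma gconv1_Q_has_derivative:
  "((\<lambda>h. gconv1 \<mu> (Q h) a x) has_real_derivative
     - gconv1 \<mu> (Q 0) (D *v (Q 0 *v a)) x
     + (\<Sum>i\<in>UNIV. gconv3 \<mu> (Q 0) a (axis i 1) (D *v axis i 1) x) / 2) (at 0)"
proof -
  obtain \<delta> C l where "\<delta> > 0" "C \<ge> 0"
    and close: "\<And>h z. \<bar>h\<bar> < \<delta> \<Longrightarrow> norm ((Q h - Q 0) *v z) \<le> C * \<bar>h\<bar> * norm z"
    and coercive: "\<And>h. \<bar>h\<bar> < \<delta> \<Longrightarrow> coercive l (Q h)"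
    using Q_local_control by blast
  have "l > 0"
    using coercive[of 0] \<open>\<delta> > 0\<close> unfolding coercive_def by simp
  obtain B1 where B1: "\<And>z::real^'n. norm z ^ 1 * exp (- l * (norm z)\<^sup>2 / 2) \<le> B1"
    using power_mult_exp_bounded[OF \<open>l > 0\<close>] by blast
  obtain B3 where B3: "\<And>z::real^'n. norm z ^ 3 * exp (- l * (norm z)\<^sup>2 / 2) \<le> B3"
    using power_mult_exp_bounded[OF \<open>l > 0\<close>] by blast
  obtain C0 where C0: "\<And>z. \<bar>gker1 (Q 0) a z\<bar> \<le> C0"
    using gker1_bounded[OF Q_sym_pd] by blast
  interpret gauss_conv \<mu> "Q 0"
    by (rule gauss_conv.intro[OF prob sets_borel Q_sym_pd])
  have "((\<lambda>h. \<integral>y. gker1 (Q h) a (x - y) \<partial>\<mu>) has_real_derivative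
      (\<integral>y. - gker1 (Q 0) (D *v (Q 0 *v a)) (x - y)
        + (\<Sum>i\<in>UNIV. gker3 (Q 0) a (axis i 1) (D *v axis i 1) (x - y)) / 2 \<partial>\<mu>)) (at 0)"
  proof (rule has_real_derivative_convolution_param[OF prob sets_borel \<open>\<delta> > 0\<close>])
    show "\<bar>gker1 (Q 0) a z\<bar> \<le> C0" for z
      by (rule C0)
    show "((\<lambda>h. gker1 (Q h) a z) has_real_derivative - gker1 (Q 0) (D *v (Q 0 *v a)) z
        + (\<Sum>i\<in>UNIV. gker3 (Q 0) a (axis i 1) (D *v axis i 1) z) / 2) (at 0)" for z
      by (rule gker1_Q_has_derivative)
    show "\<bar>gker1 (Q h) a z - gker1 (Q 0) a z\<bar>
        \<le> (C * norm a * B1 + C * norm (Q 0) * norm a / 2 * B3) * \<bar>h\<bar>" if "\<bar>h\<bar> < \<delta>" for h z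
    proof -
      have "\<bar>gker1 (Q h) a z - gker1 (Q 0) a z\<bar>
          \<le> C * \<bar>h\<bar> * norm a * (norm z ^ 1 * exp (- l * (norm z)\<^sup>2 / 2))
            + C * \<bar>h\<bar> * norm (Q 0) * norm a / 2 * (norm z ^ 3 * exp (- l * (norm z)\<^sup>2 / 2))"
        using gker1_diff_lipschitz[OF coercive[OF that] coercive close[OF that]] \<open>\<delta> > 0\<close> \<open>C \<ge> 0\<close>
        by simp
      also have "\<dots> \<le> C * \<bar>h\<bar> * norm a * B1 + C * \<bar>h\<bar> * norm (Q 0) * norm a / 2 * B3"
        using B1 B3 \<open>C \<ge> 0\<close> by (intro add_mono mult_left_mono) auto
      finally show ?thesis by (simp add: algebra_simps)
    qed
  qed (auto intro!: continuous_intros gker1_continuous gker3_continuous)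
  then show ?thesis
    unfolding gconv1_def gconv3_def
    by (simp add: integrable_gker1 integrable_gker3 Bochner_Integration.integral_sum)
qed

lemma score_formula_Q_has_derivative:
  "((\<lambda>h. score_formula \<mu> (Q h) x) has_vector_derivative
     (1/2) *\<^sub>R (\<Sum>i\<in>UNIV. score_deriv2 \<mu> (Q 0) x (D *v axis i 1) (axis i 1))
     + score_deriv \<mu> (Q 0) x (D *v score_formula \<mu> (Q 0) x)) (at 0)"
proof (rule has_vector_derivative_cart)
  fix k
  interpret gauss_conv \<mu> "Q 0"
    by (rule gauss_conv.intro[OF prob sets_borel Q_sym_pd])
  let ?n = "gconv \<mu> (Q 0) x" and ?e = "\<lambda>i. axis i 1 :: real^'n"
  let ?P = "\<Sum>i\<in>UNIV. gconv2 \<mu> (Q 0) (?e i) (D *v ?e i) x"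
  let ?T = "\<Sum>i\<in>UNIV. gconv3 \<mu> (Q 0) (?e k) (?e i) (D *v ?e i) x"
  let ?c = "gconv1 \<mu> (Q 0) (D *v (Q 0 *v ?e k)) x"
  have "?n \<noteq> 0"
    using gconv_pos[of x] by simp
  have "((\<lambda>h. - gconv1 \<mu> (Q h) (?e k) x / gconv \<mu> (Q h) x) has_real_derivative
      (- (- ?c + ?T / 2) * ?n - (- gconv1 \<mu> (Q 0) (?e k) x) * (?P / 2)) / (?n * ?n)) (at 0)"
    by (rule DERIV_divide[OF DERIV_minus[OF gconv1_Q_has_derivative] gconv_Q_has_derivative \<open>?n \<noteq> 0\<close>])
  moreover have "(- (- ?c + ?T / 2) * ?n - (- gconv1 \<mu> (Q 0) (?e k) x) * (?P / 2)) / (?n * ?n)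
      = ((1/2) *\<^sub>R (\<Sum>i\<in>UNIV. score_deriv2 \<mu> (Q 0) x (D *v ?e i) (?e i))
         + score_deriv \<mu> (Q 0) x (D *v score_formula \<mu> (Q 0) x)) $ k"
    unfolding vector_add_component vector_scaleR_component sum_component
      sum_score_deriv2_component[OF symmetric_deriv]
      score_deriv_along_score_component[OF symmetric_deriv]
    using \<open>?n \<noteq> 0\<close> by (simp add: gconv1_vec_def field_simps power2_eq_square power3_eq_cube)
  ultimately show "((\<lambda>h. score_formula \<mu> (Q h) x $ k) has_real_derivative
      ((1/2) *\<^sub>R (\<Sum>i\<in>UNIV. score_deriv2 \<mu> (Q 0) x (D *v ?e i) (?e i))
       + score_deriv \<mu> (Q 0) x (D *v score_formula \<mu> (Q 0) x)) $ k) (at 0)"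
    unfolding score_formula_def by simp
qed

end

end

lemma score_smoothed_density_param_deriv:
  fixes p0 :: "(real^'d) measure" and M :: "real^'c \<Rightarrow> real^'d^'d"
  assumes "prob_space p0" "sets p0 = sets borel"
    and M_pd: "\<And>\<theta>. sym_pd (M \<theta>)" and M_diff: "\<And>\<theta>. M differentiable (at \<theta>)"
  shows "pderiv_param (\<lambda>\<theta>'. score (smoothed_density p0 (M \<theta>')) x) \<theta> j =
      (1/2) *\<^sub>R (\<Sum>i\<in>UNIV. dderiv2 (\<lambda>r \<sigma>. score (smoothed_density p0 (M \<theta>))
          (x + r *\<^sub>R axis i 1 + \<sigma> *\<^sub>R (pderiv_param M \<theta> j *v axis i 1))))
      + vector_derivative (\<lambda>\<sigma>. score (smoothed_density p0 (M \<theta>))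
          (x + \<sigma> *\<^sub>R (pderiv_param M \<theta> j *v score (smoothed_density p0 (M \<theta>)) x))) (at 0)"
proof -
  define m where "m h = M (\<theta> + h *\<^sub>R axis j 1)" for h
  define D where "D = pderiv_param M \<theta> j"
  have "m differentiable (at 0)"
    unfolding m_def using M_diff
    by (intro differentiable_chain_at[of "\<lambda>h. \<theta> + h *\<^sub>R axis j 1" 0 M, unfolded o_def])
      (auto intro!: derivative_eq_intros simp: differentiable_def)
  then have "(m has_vector_derivative D) (at 0)"
    unfolding D_def pderiv_param_def m_def[symmetric] by (simp add: vector_derivative_works)
  moreover have "sym_pd (m h)" for h
    unfolding m_def by (rule M_pd)
  ultimately interpret spd_curve m D
    by (rule spd_curve.intro)
  interpret gauss_conv p0 "matrix_inv (m 0)"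
    by (rule gauss_conv.intro[OF assms(1,2) Q_sym_pd])
  have score: "score (smoothed_density p0 (M \<theta>')) = score_formula p0 (matrix_inv (M \<theta>'))" for \<theta>'
    by (rule score_smoothed_density[OF assms(1,2) M_pd])
  have "pderiv_param (\<lambda>\<theta>'. score (smoothed_density p0 (M \<theta>')) x) \<theta> j
      = vector_derivative (\<lambda>h. score_formula p0 (matrix_inv (m h)) x) (at 0)"
    unfolding pderiv_param_def score m_def ..
  moreover have "score (smoothed_density p0 (M \<theta>)) = score_formula p0 (matrix_inv (m 0))"
    unfolding score m_def by simp
  ultimately show ?thesis
    unfolding D_def[symmetric]
    by (simp add: vector_derivative_at[OF score_formula_Q_has_derivative[OF assms(1,2)]]
        dderiv2_score_formula vector_derivative_at[OF score_formula_has_derivative_line])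
qed

theorem theorem1:
  fixes p0 :: "(real^'d) measure"
    and M :: "real \<Rightarrow> real^'c \<Rightarrow> real^'d^'d"
    and t T :: real
    and s :: "real^'d \<Rightarrow> real \<Rightarrow> 'p \<Rightarrow> real^'d"
    and \<phi>star :: "real^'c \<Rightarrow> 'p"
  assumes p0: "prob_space p0" "sets p0 = sets borel"
    and t_pos: "t > 0"
    and M_pd: "\<And>\<theta>. sym_pd (M t \<theta>)"
    and M_diff: "\<And>\<theta>. M t differentiable (at \<theta>)"
  shows
    "(\<forall>\<theta> j x.
        pderiv_param (\<lambda>\<theta>'. score (smoothed_density p0 (M t \<theta>')) x) \<theta> j =
          (1/2) *\<^sub>R (\<Sum>i\<in>UNIV. dderiv2 (\<lambda>r \<sigma>.
               score (smoothed_density p0 (M t \<theta>))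
                 (x + r *\<^sub>R axis i 1 + \<sigma> *\<^sub>R (pderiv_param (M t) \<theta> j *v axis i 1))))
          + vector_derivative (\<lambda>\<sigma>.
               score (smoothed_density p0 (M t \<theta>))
                 (x + \<sigma> *\<^sub>R (pderiv_param (M t) \<theta> j
                        *v score (smoothed_density p0 (M t \<theta>)) x))) (at 0))
     \<and>
     ((T > 0
       \<and> (\<forall>\<theta>. M 0 \<theta> = 0)
       \<and> (\<forall>\<theta>. \<forall>\<tau>\<in>{0<..T}. sym_pd (M \<tau> \<theta>))
       \<and> (\<forall>\<theta>. \<forall>\<tau>\<in>{0..T}. (\<lambda>u. M u \<theta>) differentiable (at \<tau> within {0..T})
                          \<and> sym_pd (time_deriv M T \<tau> \<theta>))
       \<and> (\<forall>\<theta> \<phi>. score_loss p0 M T s \<theta> (\<phi>star \<theta>) \<le> score_loss p0 M T s \<theta> \<phi>)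
       \<and> (\<forall>\<theta> x. s x t (\<phi>star \<theta>) = score (smoothed_density p0 (M t \<theta>)) x))
      \<longrightarrow>
      (\<forall>\<theta> j x.
        pderiv_param (\<lambda>\<theta>'. s x t (\<phi>star \<theta>')) \<theta> j =
          (1/2) *\<^sub>R (\<Sum>i\<in>UNIV. dderiv2 (\<lambda>r \<sigma>.
               s (x + r *\<^sub>R axis i 1 + \<sigma> *\<^sub>R (pderiv_param (M t) \<theta> j *v axis i 1)) t (\<phi>star \<theta>)))
          + vector_derivative (\<lambda>\<sigma>.
               s (x + \<sigma> *\<^sub>R (pderiv_param (M t) \<theta> j *v s x t (\<phi>star \<theta>))) t (\<phi>star \<theta>))
              (at 0)))"
proof -
  note param_deriv = score_smoothed_density_param_deriv[OF p0 M_pd M_diff]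
  show ?thesis
    by (auto simp: param_deriv)
qed

end
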